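(* Let $(M,\mathbf g)$ be a $(d+1)$-dimensional spacetime carrying a steady perfect fluid flow with respect to a timelike Killing vector field $\boldsymbol\xi$ on a neighborhood $U$ of a point $p$, with fluid variables of class $C^2$ near $p$. Suppose that $p$ is a sonic point and that the expansion $\Theta$ of the streamline congruence does not vanish at $p$. Then $v_{\rm s}(p)=1/\sqrt d$ if and only if $\boldsymbol\sigma(\bar{\boldsymbol\xi},\bar{\boldsymbol\xi})|_p=0$, where $\boldsymbol\sigma$ is the shear tensor of the streamline congruence.
   Context: A perfect fluid on a $(d+1)$-dimensional Lorentzian spacetime $(M,\mathbf g)$ consists of positive functions $n,h,P,s,T$ (number density, specific enthalpy, pressure, specific entropy, temperature) and a vector field $\mathbf u$ with $\mathbf u\cdot\mathbf u=-1$, satisfying $\mathbf d h=T\,\mathbf d s+n^{-1}\mathbf d P$, $\nabla\cdot(n\mathbf u)=0$, $\nabla\cdot(nh\,\mathbf u\otimes\mathbf u+P\,\mathbf g^{-1})=0$, and an equation of state $h=h(P,s)$ with speed of sound $v_{\rm s}$, $v_{\rm s}^2=(\partial\ln h/\partial\ln n)_s\in(0,1)$. The flow is steady with respect to the timelike Killing field $\boldsymbol\xi$ on $U$ if $\mathcal L_{\boldsymbol\xi}P=\mathcal L_{\boldsymbol\xi}s=0$, $\mathcal L_{\boldsymbol\xi}\mathbf u=0$. Set $\bar{\boldsymbol\xi}=\boldsymbol\xi/\sqrt{|\boldsymbol\xi\cdot\boldsymbol\xi|}$ and write $\mathbf u=(1-v^2)^{-1/2}(\bar{\boldsymbol\xi}+v\bar{\boldsymbol\eta})$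 with $v\in[0,1)$ and $\bar{\boldsymbol\eta}$ unit spacelike orthogonal to $\bar{\boldsymbol\xi}$, with $\mathcal L_{\boldsymbol\xi}\bar{\boldsymbol\eta}=0$; integral curves of $\bar{\boldsymbol\eta}$ are the streamlines. Let $B_{\mu\nu}=\nabla_\mu\bar\eta_\nu$, $\mathbf a=\nabla_{\bar{\boldsymbol\eta}}\bar{\boldsymbol\eta}$, $\mathbf g^\perp=\mathbf g-\bar{\boldsymbol\eta}^\flat\otimes\bar{\boldsymbol\eta}^\flat$, and decompose $\mathbf B-\bar{\boldsymbol\eta}^\flat\otimes\mathbf a^\flat=\frac{\Theta}{d}\mathbf g^\perp+\boldsymbol\sigma+\boldsymbol\omega$, where $\Theta=\nabla\cdot\bar{\boldsymbol\eta}$ (expansion), $\boldsymbol\sigma$ is symmetric and trace-free (shear) and $\boldsymbol\omega$ is antisymmetric (vorticity). A sonic point is a point $p$ with $v(p)=v_{\rm s}(p)$. *)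

theory Defs
  imports "HOL-Analysis.Analysis"
begin

text \<open>Local-coordinate (chart) formulation. Spacetime points are coordinates
  x :: real^'n, with CARD('n) = d+1. Vectors/covectors are given by their
  components; the metric by its component matrix g x.\<close>

fun Ck :: "nat \<Rightarrow> 'a::euclidean_space set \<Rightarrow> ('a \<Rightarrow> real) \<Rightarrow> bool" where
  "Ck 0 U f = continuous_on U f"
| "Ck (Suc k) U f = ((\<forall>x\<in>U. f differentiable (at x)) \<and>
      (\<forall>b\<in>Basis. Ck k U (\<lambda>x. frechet_derivative f (at x) b)))"

definition smooth_fn :: "'a::euclidean_space set \<Rightarrow> ('a \<Rightarrow> real) \<Rightarrow> bool" where
  "smooth_fn U f = (\<forall>k. Ck k U f)"

definition Ck_vec :: "nat \<Rightarrow> (real^'n) set \<Rightarrow> (real^'n \<Rightarrow> real^'n) \<Rightarrow> bool" where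
  "Ck_vec k U X = (\<forall>i. Ck k U (\<lambda>x. X x $ i))"

definition smooth_vec :: "(real^'n) set \<Rightarrow> (real^'n \<Rightarrow> real^'n) \<Rightarrow> bool" where
  "smooth_vec U X = (\<forall>i. smooth_fn U (\<lambda>x. X x $ i))"

definition smooth_metric :: "(real^'n) set \<Rightarrow> (real^'n \<Rightarrow> real^'n^'n) \<Rightarrow> bool" where
  "smooth_metric U g = (\<forall>i j. smooth_fn U (\<lambda>x. g x $ i $ j))"

definition pd :: "(real^'n \<Rightarrow> real) \<Rightarrow> 'n \<Rightarrow> real^'n \<Rightarrow> real" where
  "pd f i x = frechet_derivative f (at x) (axis i 1)"

definition quad :: "real^'n^'n \<Rightarrow> real^'n \<Rightarrow> real^'n \<Rightarrow> real" where
  "quad G X Y = (\<Sum>i\<in>UNIV. \<Sum>j\<in>UNIV. G $ i $ j * X $ i * Y $ j)"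

text \<open>Lorentzian signature (-,+,...,+): symmetric, some timelike vector, and the
  form is positive definite on the orthogonal complement of any timelike vector.\<close>
definition lorentzian :: "real^'n^'n \<Rightarrow> bool" where
  "lorentzian G = ((\<forall>i j. G $ i $ j = G $ j $ i) \<and> (\<exists>t. quad G t t < 0) \<and>
     (\<forall>t w. quad G t t < 0 \<longrightarrow> quad G t w = 0 \<longrightarrow> w \<noteq> 0 \<longrightarrow> quad G w w > 0))"

definition lower :: "(real^'n \<Rightarrow> real^'n^'n) \<Rightarrow> (real^'n \<Rightarrow> real^'n) \<Rightarrow> real^'n \<Rightarrow> real^'n" where
  "lower g X x = (\<chi> i. \<Sum>j\<in>UNIV. g x $ i $ j * X x $ j)"

definition christ :: "(real^'n \<Rightarrow> real^'n^'n) \<Rightarrow> 'n \<Rightarrow> 'n \<Rightarrow> 'n \<Rightarrow> real^'n \<Rightarrow> real" where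
  "christ g k i j x = (1/2) * (\<Sum>l\<in>UNIV. matrix_inv (g x) $ k $ l *
      (pd (\<lambda>y. g y $ l $ j) i x + pd (\<lambda>y. g y $ l $ i) j x - pd (\<lambda>y. g y $ i $ j) l x))"

definition cov_vec :: "(real^'n \<Rightarrow> real^'n^'n) \<Rightarrow> (real^'n \<Rightarrow> real^'n) \<Rightarrow> 'n \<Rightarrow> 'n \<Rightarrow> real^'n \<Rightarrow> real" where
  "cov_vec g X i k x = pd (\<lambda>y. X y $ k) i x + (\<Sum>j\<in>UNIV. christ g k i j x * X x $ j)"

definition cov_covec :: "(real^'n \<Rightarrow> real^'n^'n) \<Rightarrow> (real^'n \<Rightarrow> real^'n) \<Rightarrow> 'n \<Rightarrow> 'n \<Rightarrow> real^'n \<Rightarrow> real" where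
  "cov_covec g w i j x = pd (\<lambda>y. w y $ j) i x - (\<Sum>l\<in>UNIV. christ g l i j x * w x $ l)"

definition divergence :: "(real^'n \<Rightarrow> real^'n^'n) \<Rightarrow> (real^'n \<Rightarrow> real^'n) \<Rightarrow> real^'n \<Rightarrow> real" where
  "divergence g X x = (\<Sum>i\<in>UNIV. cov_vec g X i i x)"

definition div_tensor :: "(real^'n \<Rightarrow> real^'n^'n) \<Rightarrow> (real^'n \<Rightarrow> real^'n^'n) \<Rightarrow> 'n \<Rightarrow> real^'n \<Rightarrow> real" where
  "div_tensor g T \<nu> x = (\<Sum>\<mu>\<in>UNIV. pd (\<lambda>y. T y $ \<mu> $ \<nu>) \<mu> x
      + (\<Sum>\<kappa>\<in>UNIV. christ g \<mu> \<mu> \<kappa> x * T x $ \<kappa> $ \<nu>)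
      + (\<Sum>\<kappa>\<in>UNIV. christ g \<nu> \<mu> \<kappa> x * T x $ \<mu> $ \<kappa>))"

definition killing_on :: "(real^'n \<Rightarrow> real^'n^'n) \<Rightarrow> (real^'n) set \<Rightarrow> (real^'n \<Rightarrow> real^'n) \<Rightarrow> bool" where
  "killing_on g U \<xi> = (\<forall>x\<in>U. \<forall>i j. cov_covec g (lower g \<xi>) i j x + cov_covec g (lower g \<xi>) j i x = 0)"

definition lie_scalar :: "(real^'n \<Rightarrow> real^'n) \<Rightarrow> (real^'n \<Rightarrow> real) \<Rightarrow> real^'n \<Rightarrow> real" where
  "lie_scalar X f x = (\<Sum>\<mu>\<in>UNIV. X x $ \<mu> * pd f \<mu> x)"

definition lie_vec :: "(real^'n \<Rightarrow> real^'n) \<Rightarrow> (real^'n \<Rightarrow> real^'n) \<Rightarrow> real^'n \<Rightarrow> real^'n" where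
  "lie_vec X Y x = (\<chi> k. \<Sum>\<mu>\<in>UNIV. X x $ \<mu> * pd (\<lambda>y. Y y $ k) \<mu> x - Y x $ \<mu> * pd (\<lambda>y. X y $ k) \<mu> x)"

text \<open>(\<partial> ln h / \<partial> ln n)_s for state functions h = H(P,s), n = N(P,s):
  written out by the chain rule as (n/h) (\<partial>_P H)/(\<partial>_P N) at fixed s.\<close>
definition sound_speed_sq :: "(real \<Rightarrow> real \<Rightarrow> real) \<Rightarrow> (real \<Rightarrow> real \<Rightarrow> real) \<Rightarrow> real \<Rightarrow> real \<Rightarrow> real" where
  "sound_speed_sq H N P s = (N P s / H P s) * deriv (\<lambda>q. H q s) P / deriv (\<lambda>q. N q s) P"

definition eos :: "(real \<times> real) set \<Rightarrow> (real \<Rightarrow> real \<Rightarrow> real) \<Rightarrow> (real \<Rightarrow> real \<Rightarrow> real)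
     \<Rightarrow> (real \<Rightarrow> real \<Rightarrow> real) \<Rightarrow> bool" where
  "eos D H N Tm = (open D \<and>
     Ck 2 D (\<lambda>z. H (fst z) (snd z)) \<and> Ck 2 D (\<lambda>z. N (fst z) (snd z)) \<and> Ck 2 D (\<lambda>z. Tm (fst z) (snd z)) \<and>
     (\<forall>P s. (P, s) \<in> D \<longrightarrow>
        P > 0 \<and> H P s > 0 \<and> N P s > 0 \<and> Tm P s > 0 \<and>
        ((\<lambda>q. H q s) has_real_derivative (1 / N P s)) (at P) \<and>
        ((\<lambda>r. H P r) has_real_derivative (Tm P s)) (at s) \<and>
        deriv (\<lambda>q. N q s) P \<noteq> 0 \<and>
        0 < sound_speed_sq H N P s \<and> sound_speed_sq H N P s < 1))"

definition normalize_field :: "(real^'n \<Rightarrow> real^'n^'n) \<Rightarrow> (real^'n \<Rightarrow> real^'n) \<Rightarrow> real^'n \<Rightarrow> real^'n" where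
  "normalize_field g \<xi> x = (1 / sqrt \<bar>quad (g x) (\<xi> x) (\<xi> x)\<bar>) *\<^sub>R \<xi> x"

definition expansion :: "(real^'n \<Rightarrow> real^'n^'n) \<Rightarrow> (real^'n \<Rightarrow> real^'n) \<Rightarrow> real^'n \<Rightarrow> real" where
  "expansion g \<eta> x = divergence g \<eta> x"

definition accel :: "(real^'n \<Rightarrow> real^'n^'n) \<Rightarrow> (real^'n \<Rightarrow> real^'n) \<Rightarrow> real^'n \<Rightarrow> real^'n" where
  "accel g \<eta> x = (\<chi> \<nu>. \<Sum>\<mu>\<in>UNIV. \<eta> x $ \<mu> * cov_vec g \<eta> \<mu> \<nu> x)"

definition Bred :: "(real^'n \<Rightarrow> real^'n^'n) \<Rightarrow> (real^'n \<Rightarrow> real^'n) \<Rightarrow> 'n \<Rightarrow> 'n \<Rightarrow> real^'n \<Rightarrow> real" where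
  "Bred g \<eta> \<mu> \<nu> x = cov_covec g (lower g \<eta>) \<mu> \<nu> x - lower g \<eta> x $ \<mu> * lower g (accel g \<eta>) x $ \<nu>"

definition gperp :: "(real^'n \<Rightarrow> real^'n^'n) \<Rightarrow> (real^'n \<Rightarrow> real^'n) \<Rightarrow> 'n \<Rightarrow> 'n \<Rightarrow> real^'n \<Rightarrow> real" where
  "gperp g \<eta> \<mu> \<nu> x = g x $ \<mu> $ \<nu> - lower g \<eta> x $ \<mu> * lower g \<eta> x $ \<nu>"

text \<open>shear: the symmetric trace-free part in
  B - \<eta>\<otimes>a = (\<Theta>/d) g^\<perp> + \<sigma> + \<omega>, i.e. \<sigma> = sym(B - \<eta>\<otimes>a) - (\<Theta>/d) g^\<perp>,
  where d + 1 = CARD('n).\<close>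
definition shear :: "(real^'n \<Rightarrow> real^'n^'n) \<Rightarrow> (real^'n \<Rightarrow> real^'n) \<Rightarrow> 'n \<Rightarrow> 'n \<Rightarrow> real^'n \<Rightarrow> real" where
  "shear g \<eta> \<mu> \<nu> x = (Bred g \<eta> \<mu> \<nu> x + Bred g \<eta> \<nu> \<mu> x) / 2
     - expansion g \<eta> x / (real CARD('n) - 1) * gperp g \<eta> \<mu> \<nu> x"

definition tensor_eval :: "('n \<Rightarrow> 'n \<Rightarrow> real) \<Rightarrow> real^'n \<Rightarrow> real^'n \<Rightarrow> real" where
  "tensor_eval S X Y = (\<Sum>\<mu>\<in>UNIV. \<Sum>\<nu>\<in>UNIV. S \<mu> \<nu> * X $ \<mu> * Y $ \<nu>)"

end

theory Submission
  imports Defs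
begin

text \<open>Write \<open>u = \<alpha> \<xi> + \<beta> \<eta>\<close> with \<open>\<alpha> = (u\<cdot>\<xi>)/(\<xi>\<cdot>\<xi>)\<close> and \<open>\<beta> = u\<cdot>\<eta>\<close>.
  Contracting the Euler equation with \<open>u\<close> and using the Gibbs relation shows that the flow is
  isentropic, so the continuity equation gives \<open>\<nabla>\<^sub>u h = - v\<^sub>s\<^sup>2 h \<nabla>\<cdot>u\<close>; contracting it with the
  Killing field \<open>\<xi>\<close> gives Bernoulli's law \<open>\<nabla>\<^sub>u (h u\<cdot>\<xi>) = 0\<close>. As \<open>\<nabla>\<cdot>\<xi> = 0\<close> and \<open>\<alpha>\<close> is
  invariant along \<open>\<xi>\<close>, \<open>\<nabla>\<cdot>u = \<nabla>\<^sub>\<eta> \<beta> + \<beta> \<Theta>\<close>. Together with the \<open>\<eta>\<close>-derivatives of the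
  normalisation \<open>\<beta>\<^sup>2 + \<alpha>\<^sup>2 \<xi>\<cdot>\<xi> = -1\<close> and of \<open>\<alpha>\<close>, the sonic condition
  \<open>\<beta>\<^sup>2 = - v\<^sub>s\<^sup>2 \<alpha>\<^sup>2 \<xi>\<cdot>\<xi>\<close> forces \<open>\<nabla>\<^sub>\<eta>(\<xi>\<cdot>\<xi>) = 2 v\<^sub>s\<^sup>2 (\<xi>\<cdot>\<xi>) \<Theta>\<close>.
  On the other hand \<open>[\<xi>, \<eta>] = 0\<close> turns \<open>\<sigma>(\<xi>b, \<xi>b) = \<nabla>\<^sub>\<xi>\<^sub>b\<eta>\<cdot>\<xi>b + \<Theta>/d\<close> into
  \<open>- \<nabla>\<^sub>\<eta>(\<xi>\<cdot>\<xi>) / (2 \<xi>\<cdot>\<xi>) + \<Theta>/d\<close>, so \<open>\<sigma>(\<xi>b, \<xi>b) = \<Theta> (1/d - v\<^sub>s\<^sup>2)\<close>, which vanishes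
  exactly when \<open>v\<^sub>s\<^sup>2 = 1/d\<close> because \<open>\<Theta> \<noteq> 0\<close>.\<close>

section \<open>Calculus in a chart\<close>

lemma pd_eq_of_has_derivative: "(f has_derivative f') (at x) \<Longrightarrow> pd f i x = f' (axis i 1)"
  unfolding pd_def by (metis frechet_derivative_at)

lemma pd_mult:
  assumes "f differentiable (at x)" "g differentiable (at x)"
  shows "pd (\<lambda>y. f y * g y) i x = pd f i x * g x + f x * pd g i x"
proof -
  have "((\<lambda>y. f y * g y) has_derivative
      (\<lambda>h. f x * frechet_derivative g (at x) h + frechet_derivative f (at x) h * g x)) (at x)"
    using assms[unfolded frechet_derivative_works] by (rule has_derivative_mult)
  from pd_eq_of_has_derivative[OF this, of i] show ?thesis by (simp add: pd_def)
qed

lemma pd_add: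
  assumes "f differentiable (at x)" "g differentiable (at x)"
  shows "pd (\<lambda>y. f y + g y) i x = pd f i x + pd g i x"
proof -
  have "((\<lambda>y. f y + g y) has_derivative
      (\<lambda>h. frechet_derivative f (at x) h + frechet_derivative g (at x) h)) (at x)"
    using assms[unfolded frechet_derivative_works] by (rule has_derivative_add)
  from pd_eq_of_has_derivative[OF this, of i] show ?thesis by (simp add: pd_def)
qed

lemma pd_divide:
  assumes "f differentiable (at x)" "g differentiable (at x)" "g x \<noteq> 0"
  shows "pd (\<lambda>y. f y / g y) i x = (pd f i x * g x - f x * pd g i x) / (g x * g x)"
proof -
  have "((\<lambda>y. f y / g y) has_derivative (\<lambda>h. (frechet_derivative f (at x) h * g x
      - f x * frechet_derivative g (at x) h) / (g x * g x))) (at x)"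
    using assms(1,2)[unfolded frechet_derivative_works] assms(3) by (rule has_derivative_divide')
  from pd_eq_of_has_derivative[OF this, of i] show ?thesis by (simp add: pd_def)
qed

lemma pd_sum:
  assumes "finite S" "\<forall>k\<in>S. F k differentiable (at x)"
  shows "pd (\<lambda>y. \<Sum>k\<in>S. F k y) i x = (\<Sum>k\<in>S. pd (F k) i x)"
proof -
  have "((\<lambda>y. \<Sum>k\<in>S. F k y) has_derivative (\<lambda>h. \<Sum>k\<in>S. frechet_derivative (F k) (at x) h)) (at x)"
    using assms by (intro has_derivative_sum) (auto simp: frechet_derivative_works[symmetric])
  from pd_eq_of_has_derivative[OF this, of i] show ?thesis by (simp add: pd_def)
qed

lemma pd_const: "pd (\<lambda>y. c) i x = 0"
  by (rule pd_eq_of_has_derivative[where f'="\<lambda>h. 0", simplified]) (rule has_derivative_const)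

lemma pd_cong_open:
  assumes "open U" "x \<in> U" "\<forall>y\<in>U. f y = g y"
  shows "pd f i x = pd g i x"
proof -
  have "\<And>f'. (f has_derivative f') (at x) \<longleftrightarrow> (g has_derivative f') (at x)"
    using assms by (metis has_derivative_transform_within_open)
  then show ?thesis unfolding pd_def frechet_derivative_def by simp
qed

lemma differentiable_cong_open:
  assumes "open U" "x \<in> U" "\<forall>y\<in>U. f y = g y" "f differentiable (at x)"
  shows "g differentiable (at x)"
  using assms unfolding differentiable_def by (metis has_derivative_transform_within_open)

lemma Ck2_differentiable: "Ck 2 U f \<Longrightarrow> x \<in> U \<Longrightarrow> f differentiable (at x)"
  by (simp add: numeral_2_eq_2)

lemma smooth_fn_differentiable: "smooth_fn U f \<Longrightarrow> x \<in> U \<Longrightarrow> f differentiable (at x)"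
  unfolding smooth_fn_def by (metis Ck.simps(2))

lemma differentiable_prod:
  fixes f :: "'i \<Rightarrow> 'a::real_normed_vector \<Rightarrow> real"
  assumes "\<forall>i\<in>I. f i differentiable (at x)"
  shows "(\<lambda>x. \<Prod>i\<in>I. f i x) differentiable (at x)"
proof -
  from assms obtain D where "\<forall>i\<in>I. (f i has_derivative D i) (at x)"
    unfolding differentiable_def by metis
  then have "((\<lambda>x. \<Prod>i\<in>I. f i x) has_derivative (\<lambda>y. \<Sum>i\<in>I. D i y * (\<Prod>j\<in>I - {i}. f j x))) (at x)"
    using has_derivative_prod[of I f D x UNIV] by blast
  then show ?thesis unfolding differentiable_def by blast
qed

lemma differentiable_det:
  fixes M :: "'a::real_normed_vector \<Rightarrow> real^'n^'n"
  assumes "\<forall>i j. (\<lambda>y. M y $ i $ j) differentiable (at x)"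
  shows "(\<lambda>y. det (M y)) differentiable (at x)"
  unfolding det_def using assms
  by (intro differentiable_sum ballI differentiable_mult differentiable_prod) auto

definition dir_deriv :: "(real^'n \<Rightarrow> real) \<Rightarrow> real^'n \<Rightarrow> real^'n \<Rightarrow> real" where
  "dir_deriv f V x = (\<Sum>i\<in>UNIV. V $ i * pd f i x)"

lemma dir_deriv_mult:
  assumes "f differentiable (at x)" "g differentiable (at x)"
  shows "dir_deriv (\<lambda>y. f y * g y) V x = dir_deriv f V x * g x + f x * dir_deriv g V x"
  unfolding dir_deriv_def pd_mult[OF assms]
  by (simp add: sum_distrib_left sum_distrib_right sum.distrib algebra_simps)

lemma dir_deriv_add:
  assumes "f differentiable (at x)" "g differentiable (at x)"
  shows "dir_deriv (\<lambda>y. f y + g y) V x = dir_deriv f V x + dir_deriv g V x"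
  unfolding dir_deriv_def pd_add[OF assms] by (simp add: sum.distrib algebra_simps)

lemma dir_deriv_divide:
  assumes "f differentiable (at x)" "g differentiable (at x)" "g x \<noteq> 0"
  shows "dir_deriv (\<lambda>y. f y / g y) V x = (dir_deriv f V x * g x - f x * dir_deriv g V x) / (g x * g x)"
proof -
  have "dir_deriv (\<lambda>y. f y / g y) V x
      = (\<Sum>i\<in>UNIV. V $ i * pd f i x * g x - f x * (V $ i * pd g i x)) / (g x * g x)"
    unfolding dir_deriv_def pd_divide[OF assms] by (simp add: sum_divide_distrib algebra_simps)
  then show ?thesis
    unfolding dir_deriv_def by (simp add: sum_subtractf sum_distrib_left sum_distrib_right)
qed

lemma dir_deriv_linear: "dir_deriv f (a *\<^sub>R X + b *\<^sub>R Y) x = a * dir_deriv f X x + b * dir_deriv f Y x"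
  unfolding dir_deriv_def by (simp add: sum.distrib sum_distrib_left algebra_simps)

lemma dir_deriv_scaleR: "dir_deriv f (c *\<^sub>R X) x = c * dir_deriv f X x"
  unfolding dir_deriv_def by (simp add: sum_distrib_left mult.assoc)

lemma dir_deriv_const_on_open:
  assumes "open U" "x \<in> U" "\<forall>y\<in>U. f y = c"
  shows "dir_deriv f V x = 0"
  using pd_cong_open[OF assms] unfolding dir_deriv_def by (simp add: pd_const)

lemma sum_mult_delta_right:
  fixes f :: "'i::finite \<Rightarrow> 'a::comm_ring_1"
  shows "(\<Sum>b\<in>UNIV. f b * (if b = e then 1 else 0)) = f e"
  by (simp add: if_distrib[of "times _"] cong: if_cong)

lemma sum_mult_delta_left:
  fixes f :: "'i::finite \<Rightarrow> 'a::comm_ring_1"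
  shows "(\<Sum>b\<in>UNIV. (if e = b then 1 else 0) * f b) = f e"
  by (simp add: if_distrib[of "\<lambda>c. c * _"] cong: if_cong)

lemma sum3_swap_inner:
  "(\<Sum>a\<in>A. \<Sum>b\<in>B. \<Sum>c\<in>C. f a b c) = (\<Sum>a\<in>A. \<Sum>c\<in>C. \<Sum>b\<in>B. (f a b c :: 'a::comm_monoid_add))"
  by (rule sum.cong[OF refl]) (rule sum.swap)

lemma sum3_swap_outer:
  "(\<Sum>a\<in>A. \<Sum>b\<in>B. \<Sum>c\<in>C. f a b c) = (\<Sum>b\<in>B. \<Sum>a\<in>A. \<Sum>c\<in>C. (f a b c :: 'a::comm_monoid_add))"
  by (rule sum.swap)

lemma sum3_reverse:
  "(\<Sum>a\<in>A. \<Sum>b\<in>B. \<Sum>c\<in>C. f a b c) = (\<Sum>c\<in>C. \<Sum>b\<in>B. \<Sum>a\<in>A. (f a b c :: 'a::comm_monoid_add))"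
  by (rule trans[OF sum3_swap_outer trans[OF sum3_swap_inner sum3_swap_outer]])

lemma quad_sym: "\<forall>i j. G $ i $ j = G $ j $ i \<Longrightarrow> quad G X Y = quad G Y X"
  unfolding quad_def by (subst sum.swap) (simp add: mult_ac)

lemma quad_scaleR_left: "quad G (c *\<^sub>R X) Y = c * quad G X Y"
  unfolding quad_def by (simp add: sum_distrib_left algebra_simps)

lemma quad_scaleR_right: "quad G X (c *\<^sub>R Y) = c * quad G X Y"
  unfolding quad_def by (simp add: sum_distrib_left algebra_simps)

lemma quad_add_left: "quad G (X + Y) Z = quad G X Z + quad G Y Z"
  unfolding quad_def by (simp add: sum.distrib algebra_simps)

lemma quad_add_right: "quad G Z (X + Y) = quad G Z X + quad G Z Y"
  unfolding quad_def by (simp add: sum.distrib algebra_simps)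

lemma quad_sum_left:
  "quad G (\<chi> k. \<Sum>i\<in>UNIV. V $ i * C i k) Z = (\<Sum>i\<in>UNIV. V $ i * quad G (\<chi> k. C i k) Z)"
proof -
  have "quad G (\<chi> k. \<Sum>i\<in>UNIV. V $ i * C i k) Z
      = (\<Sum>a\<in>UNIV. \<Sum>b\<in>UNIV. \<Sum>i\<in>UNIV. V $ i * (G $ a $ b * C i a * Z $ b))"
    unfolding quad_def by (simp add: sum_distrib_left sum_distrib_right mult_ac)
  also have "\<dots> = (\<Sum>i\<in>UNIV. \<Sum>a\<in>UNIV. \<Sum>b\<in>UNIV. V $ i * (G $ a $ b * C i a * Z $ b))"
    by (rule trans[OF sum3_swap_inner sum3_swap_outer])
  finally show ?thesis unfolding quad_def by (simp add: sum_distrib_left)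
qed

lemma quad_sum_right:
  "quad G Z (\<chi> k. \<Sum>i\<in>UNIV. V $ i * C i k) = (\<Sum>i\<in>UNIV. V $ i * quad G Z (\<chi> k. C i k))"
proof -
  have "quad G Z (\<chi> k. \<Sum>i\<in>UNIV. V $ i * C i k)
      = (\<Sum>a\<in>UNIV. \<Sum>b\<in>UNIV. \<Sum>i\<in>UNIV. V $ i * (G $ a $ b * Z $ a * C i b))"
    unfolding quad_def by (simp add: sum_distrib_left sum_distrib_right mult_ac)
  also have "\<dots> = (\<Sum>i\<in>UNIV. \<Sum>a\<in>UNIV. \<Sum>b\<in>UNIV. V $ i * (G $ a $ b * Z $ a * C i b))"
    by (rule trans[OF sum3_swap_inner sum3_swap_outer])
  finally show ?thesis unfolding quad_def by (simp add: sum_distrib_left)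
qed

lemma sum_lower_eq_quad: "(\<Sum>v\<in>UNIV. (\<Sum>a\<in>UNIV. G $ v $ a * Y $ a) * X $ v) = quad G X Y"
  unfolding quad_def by (simp add: sum_distrib_right sum_distrib_left mult_ac)

lemma quad_differentiable:
  assumes "\<forall>i j. (\<lambda>y. g y $ i $ j) differentiable (at x)"
    "\<forall>k. (\<lambda>y. A y $ k) differentiable (at x)" "\<forall>k. (\<lambda>y. B y $ k) differentiable (at x)"
  shows "(\<lambda>y. quad (g y) (A y) (B y)) differentiable (at x)"
  unfolding quad_def using assms by (intro differentiable_sum ballI) auto

section \<open>Inverse metric\<close>

lemma invertible_matrix_inv:
  fixes A :: "real^'n^'n"
  assumes "invertible A"
  shows "A ** matrix_inv A = mat 1" "matrix_inv A ** A = mat 1"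
proof -
  have "\<exists>A'. A ** A' = mat 1 \<and> A' ** A = mat 1" using assms unfolding invertible_def by blast
  then have "A ** matrix_inv A = mat 1 \<and> matrix_inv A ** A = mat 1"
    unfolding matrix_inv_def by (rule someI_ex)
  then show "A ** matrix_inv A = mat 1" "matrix_inv A ** A = mat 1" by auto
qed

lemma matrix_inv_left_entry:
  fixes A :: "real^'n^'n"
  assumes "invertible A"
  shows "(\<Sum>b\<in>UNIV. matrix_inv A $ a $ b * A $ b $ c) = (if a = c then 1 else 0)"
proof -
  have "(matrix_inv A ** A) $ a $ c = (mat 1 :: real^'n^'n) $ a $ c"
    using invertible_matrix_inv(2)[OF assms] by simp
  then show ?thesis by (simp only: matrix_matrix_mult_def mat_def vec_lambda_beta)
qed

lemma matrix_inv_right_entry: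
  fixes A :: "real^'n^'n"
  assumes "invertible A"
  shows "(\<Sum>b\<in>UNIV. A $ a $ b * matrix_inv A $ b $ c) = (if a = c then 1 else 0)"
proof -
  have "(A ** matrix_inv A) $ a $ c = (mat 1 :: real^'n^'n) $ a $ c"
    using invertible_matrix_inv(1)[OF assms] by simp
  then show ?thesis by (simp only: matrix_matrix_mult_def mat_def vec_lambda_beta)
qed

lemma matrix_inv_entry_cramer:
  fixes A :: "real^'n^'n"
  assumes "invertible A"
  shows "matrix_inv A $ k $ j = det (\<chi> i l. if l = k then axis j 1 $ i else A $ i $ l) / det A"
proof -
  let ?x = "(\<chi> k. matrix_inv A $ k $ j) :: real^'n"
  have "det A \<noteq> 0" using assms invertible_det_nz by blast
  moreover have "A *v ?x = axis j 1"
    using matrix_inv_right_entry[OF assms] by (simp add: vec_eq_iff matrix_vector_mult_def axis_def)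
  ultimately have "?x = (\<chi> k. det (\<chi> i l. if l = k then axis j 1 $ i else A $ i $ l) / det A)"
    using cramer by blast
  then have "?x $ k = (\<chi> k. det (\<chi> i l. if l = k then axis j 1 $ i else A $ i $ l) / det A) $ k"
    by simp
  then show ?thesis by simp
qed

lemma matrix_inv_symmetric:
  fixes A :: "real^'n^'n"
  assumes "invertible A" "\<forall>i j. A $ i $ j = A $ j $ i"
  shows "matrix_inv A $ i $ j = matrix_inv A $ j $ i"
proof -
  have tA: "transpose A = A" using assms(2) by (simp add: transpose_def vec_eq_iff)
  have left_inverse: "transpose (matrix_inv A) ** A = mat 1"
    using matrix_transpose_mul[of A "matrix_inv A"] invertible_matrix_inv(1)[OF assms(1)] tA
    by (simp add: transpose_mat)
  have "transpose (matrix_inv A) = transpose (matrix_inv A) ** (A ** matrix_inv A)"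
    using invertible_matrix_inv(1)[OF assms(1)] by simp
  also have "\<dots> = matrix_inv A" by (simp add: matrix_mul_assoc left_inverse)
  finally have "transpose (matrix_inv A) $ j $ i = matrix_inv A $ j $ i" by simp
  then show ?thesis by (simp add: transpose_def)
qed

lemma lorentzian_invertible:
  fixes G :: "real^'n^'n"
  assumes "lorentzian G"
  shows "invertible G"
proof -
  from assms obtain t where t: "quad G t t < 0"
    and pos: "\<forall>t w. quad G t t < 0 \<longrightarrow> quad G t w = 0 \<longrightarrow> w \<noteq> 0 \<longrightarrow> quad G w w > 0"
    unfolding lorentzian_def by blast
  have "w = 0" if "G *v w = 0" for w
  proof -
    have "quad G z w = (\<Sum>i\<in>UNIV. z $ i * (G *v w) $ i)" for z
      unfolding quad_def matrix_vector_mult_def by (simp add: sum_distrib_left algebra_simps)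
    then have zero: "quad G z w = 0" for z using that by simp
    show "w = 0"
    proof (rule ccontr)
      assume "w \<noteq> 0"
      then have "quad G w w > 0" using pos t zero by blast
      then show False using zero by simp
    qed
  qed
  then have "\<exists>B. B ** G = mat 1" using matrix_left_invertible_ker by blast
  then show ?thesis using invertible_left_inverse by blast
qed

section \<open>Levi-Civita calculus\<close>

definition dmetric :: "(real^'n \<Rightarrow> real^'n^'n) \<Rightarrow> real^'n \<Rightarrow> 'n \<Rightarrow> 'n \<Rightarrow> 'n \<Rightarrow> real" where
  "dmetric g x i a b = pd (\<lambda>y. g y $ a $ b) i x"

definition cov_deriv :: "(real^'n \<Rightarrow> real^'n^'n) \<Rightarrow> (real^'n \<Rightarrow> real^'n) \<Rightarrow> real^'n \<Rightarrow> real^'n \<Rightarrow> real^'n" where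
  "cov_deriv g A V x = (\<chi> k. \<Sum>i\<in>UNIV. V $ i * cov_vec g A i k x)"

lemma cov_deriv_scaleR: "cov_deriv g A (c *\<^sub>R V) x = c *\<^sub>R cov_deriv g A V x"
  unfolding cov_deriv_def by (simp add: vec_eq_iff sum_distrib_left algebra_simps)

locale metric_chart_at =
  fixes g :: "real^'n \<Rightarrow> real^'n^'n" and U :: "(real^'n) set" and x :: "real^'n"
  assumes chart: "open U" "x \<in> U"
    and invertible: "\<forall>y\<in>U. invertible (g y)"
    and symmetric: "\<forall>y\<in>U. \<forall>i j. g y $ i $ j = g y $ j $ i"
    and metric_differentiable: "\<forall>i j. (\<lambda>y. g y $ i $ j) differentiable (at x)"
begin

abbreviation "G \<equiv> g x"
abbreviation "Ginv \<equiv> matrix_inv (g x)"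

abbreviation christ1 :: "'n \<Rightarrow> 'n \<Rightarrow> 'n \<Rightarrow> real" where
  "christ1 m i j \<equiv> (dmetric g x i m j + dmetric g x j m i - dmetric g x m i j) / 2"

lemma invertible_G: "invertible G"
  using invertible chart by blast

lemma symmetric_G: "G $ i $ j = G $ j $ i"
  using symmetric chart by blast

lemma symmetric_Ginv: "Ginv $ i $ j = Ginv $ j $ i"
  using matrix_inv_symmetric invertible_G symmetric_G by blast

lemma quad_G_sym: "quad G X Y = quad G Y X"
  using quad_sym symmetric_G by blast

lemma Ginv_G: "(\<Sum>b\<in>UNIV. Ginv $ a $ b * G $ b $ c) = (if a = c then 1 else 0)"
  by (rule matrix_inv_left_entry[OF invertible_G])

lemma G_Ginv: "(\<Sum>b\<in>UNIV. G $ a $ b * Ginv $ b $ c) = (if a = c then 1 else 0)"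
  by (rule matrix_inv_right_entry[OF invertible_G])

lemma dmetric_sym: "dmetric g x i a b = dmetric g x i b a"
  unfolding dmetric_def by (rule pd_cong_open[OF chart]) (use symmetric in blast)

lemma inverse_metric_differentiable: "(\<lambda>y. matrix_inv (g y) $ k $ j) differentiable (at x)"
proof -
  let ?f = "\<lambda>y. det (\<chi> i l. if l = k then axis j 1 $ i else g y $ i $ l) / det (g y)"
  have cramer: "\<forall>y\<in>U. ?f y = matrix_inv (g y) $ k $ j"
  proof
    fix y assume "y \<in> U"
    then have "invertible (g y)" using invertible by blast
    from matrix_inv_entry_cramer[OF this] show "?f y = matrix_inv (g y) $ k $ j" by simp
  qed
  have numerator: "(\<lambda>y. det (\<chi> i l. if l = k then axis j 1 $ i else g y $ i $ l)) differentiable (at x)"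
  proof (rule differentiable_det, intro allI)
    fix i l
    show "(\<lambda>y. (\<chi> i l. if l = k then axis j 1 $ i else g y $ i $ l) $ i $ l) differentiable (at x)"
      using metric_differentiable by (cases "l = k") auto
  qed
  have denominator: "(\<lambda>y. det (g y)) differentiable (at x)"
    using metric_differentiable by (intro differentiable_det) auto
  have "det G \<noteq> 0" using invertible_G invertible_det_nz by blast
  then have "?f differentiable (at x)" using numerator denominator by (intro differentiable_divide)
  then show ?thesis using differentiable_cong_open[OF chart cramer] by blast
qed

lemma pd_inverse_metric:
  "pd (\<lambda>y. matrix_inv (g y) $ a $ e) i x
     = - (\<Sum>b\<in>UNIV. \<Sum>c\<in>UNIV. Ginv $ a $ b * dmetric g x i b c * Ginv $ c $ e)"
proof -
  let ?d = "\<lambda>b. pd (\<lambda>y. matrix_inv (g y) $ a $ b) i x"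
  have product_rule: "(\<Sum>b\<in>UNIV. ?d b * G $ b $ c) = - (\<Sum>b\<in>UNIV. Ginv $ a $ b * dmetric g x i b c)"
    for c
  proof -
    have "\<forall>y\<in>U. (\<Sum>b\<in>UNIV. matrix_inv (g y) $ a $ b * g y $ b $ c) = (if a = c then 1 else 0)"
      using matrix_inv_left_entry invertible by blast
    then have "pd (\<lambda>y. \<Sum>b\<in>UNIV. matrix_inv (g y) $ a $ b * g y $ b $ c) i x
        = pd (\<lambda>y. if a = c then 1 else 0) i x"
      by (rule pd_cong_open[OF chart])
    then have "0 = pd (\<lambda>y. \<Sum>b\<in>UNIV. matrix_inv (g y) $ a $ b * g y $ b $ c) i x"
      by (simp only: pd_const)
    also have "\<dots> = (\<Sum>b\<in>UNIV. pd (\<lambda>y. matrix_inv (g y) $ a $ b * g y $ b $ c) i x)"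
      using inverse_metric_differentiable metric_differentiable by (intro pd_sum) auto
    also have "\<dots> = (\<Sum>b\<in>UNIV. ?d b * G $ b $ c + Ginv $ a $ b * dmetric g x i b c)"
      using inverse_metric_differentiable metric_differentiable
      by (intro sum.cong refl) (simp add: pd_mult dmetric_def)
    finally show ?thesis by (simp add: sum.distrib eq_neg_iff_add_eq_0)
  qed
  have "?d e = (\<Sum>b\<in>UNIV. ?d b * (\<Sum>c\<in>UNIV. G $ b $ c * Ginv $ c $ e))"
    by (simp only: G_Ginv sum_mult_delta_right)
  also have "\<dots> = (\<Sum>c\<in>UNIV. (\<Sum>b\<in>UNIV. ?d b * G $ b $ c) * Ginv $ c $ e)"
    by (simp add: sum_distrib_left sum_distrib_right mult.assoc) (rule sum.swap)
  also have "\<dots> = - (\<Sum>b\<in>UNIV. \<Sum>c\<in>UNIV. Ginv $ a $ b * dmetric g x i b c * Ginv $ c $ e)"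
    unfolding product_rule by (simp add: sum_distrib_right sum_negf) (rule sum.swap)
  finally show ?thesis .
qed

lemma christ_eq:
  "christ g k i j x = (\<Sum>l\<in>UNIV. Ginv $ k $ l * (dmetric g x i l j + dmetric g x j l i - dmetric g x l i j)) / 2"
  unfolding christ_def dmetric_def by simp

lemma christ_sym: "christ g k i j x = christ g k j i x"
  unfolding christ_eq using dmetric_sym by (simp add: algebra_simps)

lemma lower_christ: "(\<Sum>k\<in>UNIV. G $ m $ k * christ g k i j x) = christ1 m i j"
proof -
  let ?C = "\<lambda>l. dmetric g x i l j + dmetric g x j l i - dmetric g x l i j"
  have "(\<Sum>k\<in>UNIV. G $ m $ k * christ g k i j x) = (\<Sum>k\<in>UNIV. \<Sum>l\<in>UNIV. G $ m $ k * Ginv $ k $ l * ?C l) / 2"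
    by (simp add: christ_eq sum_distrib_left sum_divide_distrib mult.assoc)
  also have "\<dots> = (\<Sum>l\<in>UNIV. (\<Sum>k\<in>UNIV. G $ m $ k * Ginv $ k $ l) * ?C l) / 2"
    by (subst sum.swap) (simp add: sum_distrib_right)
  also have "\<dots> = ?C m / 2"
    by (simp only: G_Ginv sum_mult_delta_left)
  finally show ?thesis .
qed

lemma christ1_add_swap: "christ1 b i a + christ1 a i b = dmetric g x i a b"
  using dmetric_sym[of i a b] dmetric_sym[of a b i] dmetric_sym[of b i a] dmetric_sym[of b a i]
    dmetric_sym[of a i b]
  by (simp add: field_simps)

lemma pd_lower:
  assumes "\<forall>k. (\<lambda>y. A y $ k) differentiable (at x)"
  shows "pd (\<lambda>y. lower g A y $ j) i x
     = (\<Sum>k\<in>UNIV. dmetric g x i j k * A x $ k + G $ j $ k * pd (\<lambda>y. A y $ k) i x)"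
proof -
  have lower_j: "(\<lambda>y. lower g A y $ j) = (\<lambda>y. \<Sum>k\<in>UNIV. g y $ j $ k * A y $ k)"
    unfolding lower_def by simp
  show ?thesis
    unfolding lower_j using assms metric_differentiable by (subst pd_sum) (auto simp: pd_mult dmetric_def)
qed

lemma cov_covec_lower:
  assumes "\<forall>k. (\<lambda>y. A y $ k) differentiable (at x)"
  shows "cov_covec g (lower g A) i j x = (\<Sum>k\<in>UNIV. G $ j $ k * cov_vec g A i k x)"
proof -
  have christ_lower_A: "(\<Sum>l\<in>UNIV. christ g l i j x * lower g A x $ l) = (\<Sum>k\<in>UNIV. christ1 k i j * A x $ k)"
  proof -
    have "(\<Sum>l\<in>UNIV. christ g l i j x * lower g A x $ l)
        = (\<Sum>k\<in>UNIV. \<Sum>l\<in>UNIV. christ g l i j x * G $ l $ k * A x $ k)"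
      unfolding lower_def by (simp add: sum_distrib_left mult.assoc) (rule sum.swap)
    also have "\<dots> = (\<Sum>k\<in>UNIV. \<Sum>l\<in>UNIV. G $ k $ l * christ g l i j x * A x $ k)"
      by (intro sum.cong refl) (simp add: symmetric_G)
    finally show ?thesis by (simp add: sum_distrib_right[symmetric] lower_christ)
  qed
  have christ_A: "(\<Sum>k\<in>UNIV. G $ j $ k * (\<Sum>m\<in>UNIV. christ g k i m x * A x $ m))
      = (\<Sum>m\<in>UNIV. christ1 j i m * A x $ m)"
  proof -
    have "(\<Sum>k\<in>UNIV. G $ j $ k * (\<Sum>m\<in>UNIV. christ g k i m x * A x $ m))
        = (\<Sum>m\<in>UNIV. (\<Sum>k\<in>UNIV. G $ j $ k * christ g k i m x) * A x $ m)"
      by (simp add: sum_distrib_left sum_distrib_right mult.assoc) (rule sum.swap)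
    then show ?thesis by (simp only: lower_christ)
  qed
  have dmetric_A: "(\<Sum>k\<in>UNIV. dmetric g x i j k * A x $ k)
      = (\<Sum>k\<in>UNIV. christ1 k i j * A x $ k) + (\<Sum>k\<in>UNIV. christ1 j i k * A x $ k)"
  proof -
    have "(\<Sum>k\<in>UNIV. dmetric g x i j k * A x $ k) = (\<Sum>k\<in>UNIV. (christ1 k i j + christ1 j i k) * A x $ k)"
      by (intro sum.cong refl) (simp only: christ1_add_swap)
    then show ?thesis by (simp add: sum.distrib distrib_right)
  qed
  have rhs: "(\<Sum>k\<in>UNIV. G $ j $ k * (pd (\<lambda>y. A y $ k) i x + (\<Sum>m\<in>UNIV. christ g k i m x * A x $ m)))
     = (\<Sum>k\<in>UNIV. G $ j $ k * pd (\<lambda>y. A y $ k) i x) + (\<Sum>m\<in>UNIV. christ1 j i m * A x $ m)"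
    using christ_A by (simp add: distrib_left sum.distrib)
  have lhs: "(\<Sum>k\<in>UNIV. dmetric g x i j k * A x $ k + G $ j $ k * pd (\<lambda>y. A y $ k) i x)
     = (\<Sum>k\<in>UNIV. dmetric g x i j k * A x $ k) + (\<Sum>k\<in>UNIV. G $ j $ k * pd (\<lambda>y. A y $ k) i x)"
    by (simp add: sum.distrib)
  show ?thesis
    unfolding cov_covec_def cov_vec_def pd_lower[OF assms] christ_lower_A rhs lhs dmetric_A by simp
qed

lemma quad_cov_deriv:
  assumes "\<forall>k. (\<lambda>y. A y $ k) differentiable (at x)"
  shows "quad G (cov_deriv g A Y x) Z = (\<Sum>i\<in>UNIV. \<Sum>b\<in>UNIV. Y $ i * Z $ b * cov_covec g (lower g A) i b x)"
proof -
  have "quad G (cov_deriv g A Y x) Z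
      = (\<Sum>a\<in>UNIV. \<Sum>b\<in>UNIV. \<Sum>i\<in>UNIV. G $ a $ b * (Y $ i * cov_vec g A i a x) * Z $ b)"
    unfolding quad_def cov_deriv_def by (simp add: sum_distrib_left sum_distrib_right)
  also have "\<dots> = (\<Sum>i\<in>UNIV. \<Sum>b\<in>UNIV. \<Sum>a\<in>UNIV. G $ a $ b * (Y $ i * cov_vec g A i a x) * Z $ b)"
    by (rule trans[OF sum3_swap_inner trans[OF sum3_swap_outer sum3_swap_inner]])
  also have "\<dots> = (\<Sum>i\<in>UNIV. \<Sum>b\<in>UNIV. Y $ i * Z $ b * (\<Sum>a\<in>UNIV. G $ b $ a * cov_vec g A i a x))"
    by (intro sum.cong refl) (simp add: sum_distrib_left symmetric_G mult_ac)
  finally show ?thesis by (simp only: cov_covec_lower[OF assms])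
qed

lemma lie_vec_eq_cov_deriv: "lie_vec X Y x = cov_deriv g Y (X x) x - cov_deriv g X (Y x) x"
proof -
  have christ_terms: "(\<Sum>i\<in>UNIV. X x $ i * (\<Sum>j\<in>UNIV. christ g k i j x * Y x $ j))
      = (\<Sum>i\<in>UNIV. Y x $ i * (\<Sum>j\<in>UNIV. christ g k i j x * X x $ j))" for k
  proof -
    have "(\<Sum>i\<in>UNIV. X x $ i * (\<Sum>j\<in>UNIV. christ g k i j x * Y x $ j))
        = (\<Sum>j\<in>UNIV. \<Sum>i\<in>UNIV. X x $ i * (christ g k i j x * Y x $ j))"
      by (simp add: sum_distrib_left) (rule sum.swap)
    also have "\<dots> = (\<Sum>j\<in>UNIV. \<Sum>i\<in>UNIV. Y x $ j * (christ g k j i x * X x $ i))"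
      by (intro sum.cong refl) (simp add: christ_sym[of k] mult_ac)
    finally show ?thesis by (simp add: sum_distrib_left)
  qed
  have "(cov_deriv g Y (X x) x - cov_deriv g X (Y x) x) $ k = lie_vec X Y x $ k" for k
  proof -
    have "(cov_deriv g Y (X x) x - cov_deriv g X (Y x) x) $ k
      = (\<Sum>i\<in>UNIV. X x $ i * pd (\<lambda>y. Y y $ k) i x)
        + (\<Sum>i\<in>UNIV. X x $ i * (\<Sum>j\<in>UNIV. christ g k i j x * Y x $ j))
        - ((\<Sum>i\<in>UNIV. Y x $ i * pd (\<lambda>y. X y $ k) i x)
        + (\<Sum>i\<in>UNIV. Y x $ i * (\<Sum>j\<in>UNIV. christ g k i j x * X x $ j)))"
      unfolding cov_deriv_def cov_vec_def by (simp add: distrib_left sum.distrib)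
    then show ?thesis unfolding lie_vec_def christ_terms by (simp add: sum_subtractf)
  qed
  then show ?thesis by (simp add: vec_eq_iff)
qed

lemma killing_cov_deriv_antisym:
  assumes "\<forall>k. (\<lambda>y. A y $ k) differentiable (at x)"
    and killing: "\<forall>i j. cov_covec g (lower g A) i j x + cov_covec g (lower g A) j i x = 0"
  shows "quad G (cov_deriv g A Y x) Z + quad G (cov_deriv g A Z x) Y = 0"
proof -
  let ?K = "\<lambda>i j. cov_covec g (lower g A) i j x"
  have "quad G (cov_deriv g A Z x) Y = (\<Sum>i\<in>UNIV. \<Sum>b\<in>UNIV. Y $ i * Z $ b * ?K b i)"
    unfolding quad_cov_deriv[OF assms(1)] by (subst sum.swap) (simp add: mult_ac)
  then have "quad G (cov_deriv g A Y x) Z + quad G (cov_deriv g A Z x) Y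
      = (\<Sum>i\<in>UNIV. \<Sum>b\<in>UNIV. Y $ i * Z $ b * (?K i b + ?K b i))"
    unfolding quad_cov_deriv[OF assms(1)] by (simp add: sum.distrib distrib_left)
  then show ?thesis using killing by simp
qed

lemma divergence_killing:
  assumes "\<forall>k. (\<lambda>y. A y $ k) differentiable (at x)"
    and killing: "\<forall>i j. cov_covec g (lower g A) i j x + cov_covec g (lower g A) j i x = 0"
  shows "divergence g A x = 0"
proof -
  let ?K = "\<lambda>i j. cov_covec g (lower g A) i j x"
  have raise: "cov_vec g A i m x = (\<Sum>b\<in>UNIV. Ginv $ m $ b * ?K i b)" for i m
  proof -
    have "(\<Sum>b\<in>UNIV. Ginv $ m $ b * ?K i b)
        = (\<Sum>a\<in>UNIV. (\<Sum>b\<in>UNIV. Ginv $ m $ b * G $ b $ a) * cov_vec g A i a x)"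
      unfolding cov_covec_lower[OF assms(1)]
      by (simp add: sum_distrib_left sum_distrib_right mult.assoc) (rule sum.swap)
    then show ?thesis by (simp only: Ginv_G sum_mult_delta_left)
  qed
  define S where "S = (\<Sum>i\<in>UNIV. \<Sum>b\<in>UNIV. Ginv $ i $ b * ?K i b)"
  have "S = (\<Sum>b\<in>UNIV. \<Sum>i\<in>UNIV. Ginv $ i $ b * ?K i b)"
    unfolding S_def by (rule sum.swap)
  also have "\<dots> = (\<Sum>b\<in>UNIV. \<Sum>i\<in>UNIV. - (Ginv $ b $ i * ?K b i))"
  proof (intro sum.cong refl)
    fix b i
    have "?K i b = - ?K b i" using killing by (simp add: eq_neg_iff_add_eq_0)
    then show "Ginv $ i $ b * ?K i b = - (Ginv $ b $ i * ?K b i)" by (simp add: symmetric_Ginv[of i b])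
  qed
  also have "\<dots> = - S" unfolding S_def by (simp add: sum_negf)
  finally have "S = 0" by simp
  then show ?thesis unfolding divergence_def raise S_def by simp
qed

lemma divergence_scaleR:
  assumes "f differentiable (at x)" "\<forall>k. (\<lambda>y. A y $ k) differentiable (at x)"
  shows "divergence g (\<lambda>y. f y *\<^sub>R A y) x = dir_deriv f (A x) x + f x * divergence g A x"
proof -
  have "cov_vec g (\<lambda>y. f y *\<^sub>R A y) i i x = A x $ i * pd f i x + f x * cov_vec g A i i x" for i
    using assms pd_mult[of f x "\<lambda>y. A y $ i" i]
    unfolding cov_vec_def by (simp add: sum_distrib_left algebra_simps)
  then show ?thesis unfolding divergence_def dir_deriv_def by (simp add: sum.distrib sum_distrib_left)
qed

lemma divergence_add:
  assumes "\<forall>k. (\<lambda>y. A y $ k) differentiable (at x)" "\<forall>k. (\<lambda>y. B y $ k) differentiable (at x)"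
  shows "divergence g (\<lambda>y. A y + B y) x = divergence g A x + divergence g B x"
proof -
  have "cov_vec g (\<lambda>y. A y + B y) i i x = cov_vec g A i i x + cov_vec g B i i x" for i
    using assms pd_add[of "\<lambda>y. A y $ i" x "\<lambda>y. B y $ i" i]
    unfolding cov_vec_def by (simp add: sum.distrib algebra_simps)
  then show ?thesis unfolding divergence_def by (simp add: sum.distrib)
qed

lemma divergence_cong_open:
  assumes "\<forall>y\<in>U. A y = B y"
  shows "divergence g A x = divergence g B x"
proof -
  have "pd (\<lambda>y. A y $ i) i x = pd (\<lambda>y. B y $ i) i x" for i
    using assms by (intro pd_cong_open[OF chart]) auto
  moreover have "A x = B x" using assms chart by blast
  ultimately show ?thesis unfolding divergence_def cov_vec_def by simp
qed
lemma quad_christ_left: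
  "quad G (\<chi> k. \<Sum>m\<in>UNIV. christ g k i m x * X $ m) Y = (\<Sum>a\<in>UNIV. \<Sum>b\<in>UNIV. christ1 b i a * X $ a * Y $ b)"
proof -
  have "quad G (\<chi> k. \<Sum>m\<in>UNIV. christ g k i m x * X $ m) Y
      = (\<Sum>a\<in>UNIV. \<Sum>b\<in>UNIV. \<Sum>m\<in>UNIV. G $ a $ b * christ g a i m x * X $ m * Y $ b)"
    unfolding quad_def by (simp add: sum_distrib_left sum_distrib_right mult.assoc)
  also have "\<dots> = (\<Sum>m\<in>UNIV. \<Sum>b\<in>UNIV. \<Sum>a\<in>UNIV. G $ a $ b * christ g a i m x * X $ m * Y $ b)"
    by (rule trans[OF sum3_swap_inner trans[OF sum3_swap_outer sum3_swap_inner]])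
  also have "\<dots> = (\<Sum>m\<in>UNIV. \<Sum>b\<in>UNIV. (\<Sum>a\<in>UNIV. G $ b $ a * christ g a i m x) * X $ m * Y $ b)"
    by (intro sum.cong refl) (simp add: sum_distrib_right symmetric_G)
  finally show ?thesis by (simp only: lower_christ)
qed

lemma quad_christ_right:
  "quad G X (\<chi> k. \<Sum>m\<in>UNIV. christ g k i m x * Y $ m) = (\<Sum>a\<in>UNIV. \<Sum>b\<in>UNIV. christ1 a i b * X $ a * Y $ b)"
  unfolding quad_G_sym[of X] quad_christ_left by (subst sum.swap) (simp add: mult_ac)

lemma pd_quad:
  assumes dA: "\<forall>k. (\<lambda>y. A y $ k) differentiable (at x)" and dB: "\<forall>k. (\<lambda>y. B y $ k) differentiable (at x)"
  shows "pd (\<lambda>y. quad (g y) (A y) (B y)) i x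
     = quad G (\<chi> k. cov_vec g A i k x) (B x) + quad G (A x) (\<chi> k. cov_vec g B i k x)"
proof -
  let ?pA = "\<chi> k. pd (\<lambda>y. A y $ k) i x" and ?pB = "\<chi> k. pd (\<lambda>y. B y $ k) i x"
  have terms_differentiable: "(\<lambda>y. g y $ a $ b * A y $ a * B y $ b) differentiable (at x)" for a b
    using dA dB metric_differentiable by auto
  have "pd (\<lambda>y. quad (g y) (A y) (B y)) i x
      = (\<Sum>a\<in>UNIV. \<Sum>b\<in>UNIV. pd (\<lambda>y. g y $ a $ b * A y $ a * B y $ b) i x)"
    unfolding quad_def using terms_differentiable
    by (subst pd_sum) (auto intro!: sum.cong pd_sum)
  also have "\<dots> = (\<Sum>a\<in>UNIV. \<Sum>b\<in>UNIV. dmetric g x i a b * A x $ a * B x $ b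
      + G $ a $ b * ?pA $ a * B x $ b + G $ a $ b * A x $ a * ?pB $ b)"
    using dA dB metric_differentiable by (intro sum.cong refl) (simp add: pd_mult dmetric_def algebra_simps)
  also have "\<dots> = (\<Sum>a\<in>UNIV. \<Sum>b\<in>UNIV. christ1 b i a * A x $ a * B x $ b)
      + (\<Sum>a\<in>UNIV. \<Sum>b\<in>UNIV. christ1 a i b * A x $ a * B x $ b) + quad G ?pA (B x) + quad G (A x) ?pB"
  proof -
    have "(\<Sum>a\<in>UNIV. \<Sum>b\<in>UNIV. dmetric g x i a b * A x $ a * B x $ b)
        = (\<Sum>a\<in>UNIV. \<Sum>b\<in>UNIV. (christ1 b i a + christ1 a i b) * A x $ a * B x $ b)"
      by (intro sum.cong refl) (simp only: christ1_add_swap)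
    then show ?thesis unfolding quad_def by (simp only: sum.distrib distrib_right)
  qed
  finally have product_rule: "pd (\<lambda>y. quad (g y) (A y) (B y)) i x
      = (\<Sum>a\<in>UNIV. \<Sum>b\<in>UNIV. christ1 b i a * A x $ a * B x $ b)
      + (\<Sum>a\<in>UNIV. \<Sum>b\<in>UNIV. christ1 a i b * A x $ a * B x $ b) + quad G ?pA (B x) + quad G (A x) ?pB" .
  have cov_vec_split: "(\<chi> k. cov_vec g A i k x) = ?pA + (\<chi> k. \<Sum>m\<in>UNIV. christ g k i m x * A x $ m)"
    "(\<chi> k. cov_vec g B i k x) = ?pB + (\<chi> k. \<Sum>m\<in>UNIV. christ g k i m x * B x $ m)"
    unfolding cov_vec_def by (simp_all add: vec_eq_iff)
  show ?thesis unfolding product_rule cov_vec_split quad_add_left quad_add_right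
      quad_christ_left quad_christ_right by simp
qed

lemma dir_deriv_quad:
  assumes dA: "\<forall>k. (\<lambda>y. A y $ k) differentiable (at x)" and dB: "\<forall>k. (\<lambda>y. B y $ k) differentiable (at x)"
  shows "dir_deriv (\<lambda>y. quad (g y) (A y) (B y)) V x = quad G (cov_deriv g A V x) (B x) + quad G (A x) (cov_deriv g B V x)"
  unfolding dir_deriv_def pd_quad[OF dA dB] cov_deriv_def quad_sum_left quad_sum_right
  by (simp add: distrib_left sum.distrib)


lemma christ_trace_inverse_metric:
  "(\<Sum>m\<in>UNIV. \<Sum>k\<in>UNIV. christ g m m k x * Ginv $ k $ v)
     = (\<Sum>m\<in>UNIV. \<Sum>k\<in>UNIV. \<Sum>l\<in>UNIV. Ginv $ v $ l * Ginv $ m $ k * dmetric g x l m k) / 2"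
proof -
  have expand: "\<And>m k. christ g m m k x * Ginv $ k $ v
    = ((\<Sum>l\<in>UNIV. Ginv $ m $ l * Ginv $ k $ v * dmetric g x m l k)
      + (\<Sum>l\<in>UNIV. Ginv $ m $ l * Ginv $ k $ v * dmetric g x k l m)
      - (\<Sum>l\<in>UNIV. Ginv $ m $ l * Ginv $ k $ v * dmetric g x l m k)) / 2"
    unfolding christ_eq by (simp add: sum_distrib_right sum_distrib_left sum.distrib[symmetric] sum_subtractf[symmetric] algebra_simps)
  have "(\<Sum>m\<in>UNIV. \<Sum>k\<in>UNIV. christ g m m k x * Ginv $ k $ v)
    = ((\<Sum>m\<in>UNIV. \<Sum>k\<in>UNIV. \<Sum>l\<in>UNIV. Ginv $ m $ l * Ginv $ k $ v * dmetric g x m l k)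
      + (\<Sum>m\<in>UNIV. \<Sum>k\<in>UNIV. \<Sum>l\<in>UNIV. Ginv $ m $ l * Ginv $ k $ v * dmetric g x k l m)
      - (\<Sum>m\<in>UNIV. \<Sum>k\<in>UNIV. \<Sum>l\<in>UNIV. Ginv $ m $ l * Ginv $ k $ v * dmetric g x l m k)) / 2"
    unfolding expand by (simp only: sum_divide_distrib[symmetric] sum.distrib sum_subtractf)
  also have "(\<Sum>m\<in>UNIV. \<Sum>k\<in>UNIV. \<Sum>l\<in>UNIV. Ginv $ m $ l * Ginv $ k $ v * dmetric g x l m k)
     = (\<Sum>m\<in>UNIV. \<Sum>k\<in>UNIV. \<Sum>l\<in>UNIV. Ginv $ m $ l * Ginv $ k $ v * dmetric g x m l k)"
    by (subst sum3_reverse) (simp add: symmetric_Ginv)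
  also have "(\<Sum>m\<in>UNIV. \<Sum>k\<in>UNIV. \<Sum>l\<in>UNIV. Ginv $ m $ l * Ginv $ k $ v * dmetric g x k l m)
     = (\<Sum>m\<in>UNIV. \<Sum>k\<in>UNIV. \<Sum>l\<in>UNIV. Ginv $ v $ l * Ginv $ m $ k * dmetric g x l m k)"
    by (subst sum3_swap_inner) (simp add: symmetric_Ginv dmetric_sym mult_ac)
  finally show ?thesis by simp
qed

lemma christ_inverse_metric_contraction:
  "(\<Sum>m\<in>UNIV. \<Sum>k\<in>UNIV. christ g v m k x * Ginv $ m $ k)
     = (\<Sum>m\<in>UNIV. \<Sum>k\<in>UNIV. \<Sum>l\<in>UNIV. Ginv $ v $ l * Ginv $ m $ k * dmetric g x m l k)
       - (\<Sum>m\<in>UNIV. \<Sum>k\<in>UNIV. \<Sum>l\<in>UNIV. Ginv $ v $ l * Ginv $ m $ k * dmetric g x l m k) / 2"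
proof -
  have expand: "\<And>m k. christ g v m k x * Ginv $ m $ k
    = ((\<Sum>l\<in>UNIV. Ginv $ v $ l * Ginv $ m $ k * dmetric g x m l k)
      + (\<Sum>l\<in>UNIV. Ginv $ v $ l * Ginv $ m $ k * dmetric g x k l m)
      - (\<Sum>l\<in>UNIV. Ginv $ v $ l * Ginv $ m $ k * dmetric g x l m k)) / 2"
    unfolding christ_eq by (simp add: sum_distrib_right sum_distrib_left sum.distrib[symmetric] sum_subtractf[symmetric] algebra_simps)
  have "(\<Sum>m\<in>UNIV. \<Sum>k\<in>UNIV. christ g v m k x * Ginv $ m $ k)
    = ((\<Sum>m\<in>UNIV. \<Sum>k\<in>UNIV. \<Sum>l\<in>UNIV. Ginv $ v $ l * Ginv $ m $ k * dmetric g x m l k)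
      + (\<Sum>m\<in>UNIV. \<Sum>k\<in>UNIV. \<Sum>l\<in>UNIV. Ginv $ v $ l * Ginv $ m $ k * dmetric g x k l m)
      - (\<Sum>m\<in>UNIV. \<Sum>k\<in>UNIV. \<Sum>l\<in>UNIV. Ginv $ v $ l * Ginv $ m $ k * dmetric g x l m k)) / 2"
    unfolding expand by (simp only: sum_divide_distrib[symmetric] sum.distrib sum_subtractf)
  also have "(\<Sum>m\<in>UNIV. \<Sum>k\<in>UNIV. \<Sum>l\<in>UNIV. Ginv $ v $ l * Ginv $ m $ k * dmetric g x k l m)
     = (\<Sum>m\<in>UNIV. \<Sum>k\<in>UNIV. \<Sum>l\<in>UNIV. Ginv $ v $ l * Ginv $ m $ k * dmetric g x m l k)"
    by (subst sum3_swap_outer) (simp add: symmetric_Ginv)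
  finally show ?thesis by simp
qed

lemma div_inverse_metric: "div_tensor g (\<lambda>y. matrix_inv (g y)) v x = 0"
proof -
  have "(\<Sum>m\<in>UNIV. pd (\<lambda>y. matrix_inv (g y) $ m $ v) m x)
     = (\<Sum>m\<in>UNIV. - (\<Sum>b\<in>UNIV. \<Sum>c\<in>UNIV. Ginv $ m $ b * dmetric g x m b c * Ginv $ c $ v))"
    by (simp only: pd_inverse_metric)
  also have "\<dots> = - (\<Sum>m\<in>UNIV. \<Sum>k\<in>UNIV. \<Sum>l\<in>UNIV. Ginv $ v $ l * Ginv $ m $ k * dmetric g x m l k)"
    unfolding sum_negf[symmetric]
    by (intro sum.cong refl arg_cong[where f=uminus]) (simp add: dmetric_sym symmetric_Ginv mult_ac)
  finally show ?thesis
    unfolding div_tensor_def sum.distrib christ_trace_inverse_metric christ_inverse_metric_contraction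
    by simp
qed

lemma pd_perfect_fluid_tensor:
  assumes df: "f differentiable (at x)" and dP: "P differentiable (at x)"
    and du: "\<forall>k. (\<lambda>y. u y $ k) differentiable (at x)"
  shows "pd (\<lambda>y. f y * u y $ m * u y $ v + P y * matrix_inv (g y) $ m $ v) m x
    = pd (\<lambda>y. f y * u y $ m) m x * u x $ v + f x * u x $ m * pd (\<lambda>y. u y $ v) m x
      + pd P m x * Ginv $ m $ v + P x * pd (\<lambda>y. matrix_inv (g y) $ m $ v) m x"
proof -
  have fu: "(\<lambda>y. f y * u y $ m) differentiable (at x)" using df du by auto
  have "pd (\<lambda>y. f y * u y $ m * u y $ v + P y * matrix_inv (g y) $ m $ v) m x
      = pd (\<lambda>y. f y * u y $ m * u y $ v) m x + pd (\<lambda>y. P y * matrix_inv (g y) $ m $ v) m x"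
    using df dP du inverse_metric_differentiable by (intro pd_add) auto
  also have "pd (\<lambda>y. f y * u y $ m * u y $ v) m x
      = pd (\<lambda>y. f y * u y $ m) m x * u x $ v + f x * u x $ m * pd (\<lambda>y. u y $ v) m x"
    using pd_mult[OF fu, of "\<lambda>y. u y $ v"] du by simp
  also have "pd (\<lambda>y. P y * matrix_inv (g y) $ m $ v) m x
      = pd P m x * Ginv $ m $ v + P x * pd (\<lambda>y. matrix_inv (g y) $ m $ v) m x"
    using pd_mult[OF dP inverse_metric_differentiable] by simp
  finally show ?thesis by simp
qed

lemma div_tensor_perfect_fluid:
  assumes df: "f differentiable (at x)" and dP: "P differentiable (at x)"
    and du: "\<forall>k. (\<lambda>y. u y $ k) differentiable (at x)"
  shows "div_tensor g (\<lambda>y. \<chi> a b. f y * u y $ a * u y $ b + P y * matrix_inv (g y) $ a $ b) v x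
   = u x $ v * divergence g (\<lambda>y. f y *\<^sub>R u y) x + f x * cov_deriv g u (u x) x $ v + (\<Sum>m\<in>UNIV. Ginv $ m $ v * pd P m x)"
proof -
  let ?T = "\<lambda>y. \<chi> a b. f y * u y $ a * u y $ b + P y * matrix_inv (g y) $ a $ b"
  let ?fu = "\<lambda>m. pd (\<lambda>y. f y * u y $ m) m x"
  let ?pu = "\<lambda>m. pd (\<lambda>y. u y $ v) m x"
  let ?pG = "\<lambda>m. pd (\<lambda>y. matrix_inv (g y) $ m $ v) m x"
  have pd_T: "pd (\<lambda>y. ?T y $ m $ v) m x
      = ?fu m * u x $ v + f x * u x $ m * ?pu m + pd P m x * Ginv $ m $ v + P x * ?pG m" for m
    using pd_perfect_fluid_tensor[OF df dP du, of m v] by simp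
  have pd_sum_T: "(\<Sum>m\<in>UNIV. pd (\<lambda>y. ?T y $ m $ v) m x)
     = (\<Sum>m\<in>UNIV. ?fu m) * u x $ v + f x * (\<Sum>m\<in>UNIV. u x $ m * ?pu m) + (\<Sum>m\<in>UNIV. pd P m x * Ginv $ m $ v)
       + P x * (\<Sum>m\<in>UNIV. ?pG m)"
    unfolding pd_T by (simp add: sum.distrib sum_distrib_left sum_distrib_right mult.assoc)
  have trace_T: "(\<Sum>m\<in>UNIV. \<Sum>k\<in>UNIV. christ g m m k x * ?T x $ k $ v)
     = u x $ v * (f x * (\<Sum>m\<in>UNIV. \<Sum>k\<in>UNIV. christ g m m k x * u x $ k))
       + P x * (\<Sum>m\<in>UNIV. \<Sum>k\<in>UNIV. christ g m m k x * Ginv $ k $ v)"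
    by (simp add: sum.distrib sum_distrib_left algebra_simps)
  have christ_T: "(\<Sum>m\<in>UNIV. \<Sum>k\<in>UNIV. christ g v m k x * ?T x $ m $ k)
     = f x * (\<Sum>m\<in>UNIV. \<Sum>k\<in>UNIV. u x $ m * (christ g v m k x * u x $ k))
       + P x * (\<Sum>m\<in>UNIV. \<Sum>k\<in>UNIV. christ g v m k x * Ginv $ m $ k)"
    by (simp add: sum.distrib sum_distrib_left algebra_simps)
  have div_T: "div_tensor g ?T v x = (\<Sum>m\<in>UNIV. pd (\<lambda>y. ?T y $ m $ v) m x)
     + (\<Sum>m\<in>UNIV. \<Sum>k\<in>UNIV. christ g m m k x * ?T x $ k $ v)
     + (\<Sum>m\<in>UNIV. \<Sum>k\<in>UNIV. christ g v m k x * ?T x $ m $ k)"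
    unfolding div_tensor_def by (simp only: sum.distrib)
  have div_fu: "divergence g (\<lambda>y. f y *\<^sub>R u y) x = (\<Sum>m\<in>UNIV. ?fu m) + f x * (\<Sum>m\<in>UNIV. \<Sum>k\<in>UNIV. christ g m m k x * u x $ k)"
    unfolding divergence_def cov_vec_def by (simp add: sum.distrib sum_distrib_left algebra_simps)
  have accel_u: "cov_deriv g u (u x) x $ v = (\<Sum>m\<in>UNIV. u x $ m * ?pu m) + (\<Sum>m\<in>UNIV. \<Sum>k\<in>UNIV. u x $ m * (christ g v m k x * u x $ k))"
    unfolding cov_deriv_def cov_vec_def by (simp add: sum.distrib sum_distrib_left algebra_simps)
  have pressure: "P x * (\<Sum>m\<in>UNIV. ?pG m) + P x * (\<Sum>m\<in>UNIV. \<Sum>k\<in>UNIV. christ g m m k x * Ginv $ k $ v)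
     + P x * (\<Sum>m\<in>UNIV. \<Sum>k\<in>UNIV. christ g v m k x * Ginv $ m $ k) = 0"
    using div_inverse_metric[of v] unfolding div_tensor_def sum.distrib
    by (simp add: distrib_left[symmetric])
  have e: "(\<Sum>m\<in>UNIV. pd P m x * Ginv $ m $ v) = (\<Sum>m\<in>UNIV. Ginv $ m $ v * pd P m x)"
    by (simp add: mult.commute)
  show ?thesis unfolding div_T pd_sum_T trace_T christ_T div_fu accel_u e using pressure by (simp add: algebra_simps)
qed


lemma euler_contracted:
  assumes df: "f differentiable (at x)" and dP: "P differentiable (at x)"
    and du: "\<forall>k. (\<lambda>y. u y $ k) differentiable (at x)"
    and euler: "\<forall>v. div_tensor g (\<lambda>y. \<chi> a b. f y * u y $ a * u y $ b + P y * matrix_inv (g y) $ a $ b) v x = 0"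
  shows "quad G (u x) Y * divergence g (\<lambda>y. f y *\<^sub>R u y) x + f x * quad G (cov_deriv g u (u x) x) Y + dir_deriv P Y x = 0"
proof -
  let ?Yl = "\<lambda>v. \<Sum>a\<in>UNIV. G $ v $ a * Y $ a"
  have "0 = (\<Sum>v\<in>UNIV. ?Yl v * div_tensor g (\<lambda>y. \<chi> a b. f y * u y $ a * u y $ b + P y * matrix_inv (g y) $ a $ b) v x)"
    using euler by simp
  also have "\<dots> = (\<Sum>v\<in>UNIV. ?Yl v * (u x $ v * divergence g (\<lambda>y. f y *\<^sub>R u y) x + f x * cov_deriv g u (u x) x $ v
       + (\<Sum>m\<in>UNIV. Ginv $ m $ v * pd P m x)))"
    by (simp only: div_tensor_perfect_fluid[OF df dP du])
  also have "\<dots> = (\<Sum>v\<in>UNIV. ?Yl v * u x $ v) * divergence g (\<lambda>y. f y *\<^sub>R u y) x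
     + f x * (\<Sum>v\<in>UNIV. ?Yl v * cov_deriv g u (u x) x $ v) + (\<Sum>v\<in>UNIV. ?Yl v * (\<Sum>m\<in>UNIV. Ginv $ m $ v * pd P m x))"
    by (simp add: sum.distrib sum_distrib_left sum_distrib_right algebra_simps)
  also have "(\<Sum>v\<in>UNIV. ?Yl v * u x $ v) = quad G (u x) Y" by (rule sum_lower_eq_quad)
  also have "(\<Sum>v\<in>UNIV. ?Yl v * cov_deriv g u (u x) x $ v) = quad G (cov_deriv g u (u x) x) Y" by (rule sum_lower_eq_quad)
  also have "(\<Sum>v\<in>UNIV. ?Yl v * (\<Sum>m\<in>UNIV. Ginv $ m $ v * pd P m x)) = dir_deriv P Y x"
  proof -
    have "(\<Sum>v\<in>UNIV. ?Yl v * (\<Sum>m\<in>UNIV. Ginv $ m $ v * pd P m x))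
        = (\<Sum>v\<in>UNIV. \<Sum>m\<in>UNIV. \<Sum>a\<in>UNIV. G $ v $ a * (Y $ a * (Ginv $ m $ v * pd P m x)))"
      by (simp add: sum_distrib_left sum_distrib_right mult.assoc)
    also have "\<dots> = (\<Sum>m\<in>UNIV. \<Sum>a\<in>UNIV. \<Sum>v\<in>UNIV. G $ v $ a * (Y $ a * (Ginv $ m $ v * pd P m x)))"
      by (rule trans[OF sum3_swap_outer sum3_swap_inner])
    also have "\<dots> = (\<Sum>m\<in>UNIV. \<Sum>a\<in>UNIV. (\<Sum>v\<in>UNIV. Ginv $ m $ v * G $ v $ a) * Y $ a * pd P m x)"
      by (simp add: sum_distrib_right sum_distrib_left mult_ac)
    also have "\<dots> = (\<Sum>m\<in>UNIV. \<Sum>a\<in>UNIV. (if m = a then 1 else 0) * (Y $ a * pd P m x))"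
      by (simp only: Ginv_G mult.assoc)
    also have "\<dots> = dir_deriv P Y x" unfolding dir_deriv_def by (simp only: sum_mult_delta_left)
    finally show ?thesis .
  qed
  finally show ?thesis by simp
qed


lemma lower_inner: "(\<Sum>m\<in>UNIV. lower g A x $ m * X $ m) = quad G (A x) X"
proof -
  have "(\<Sum>m\<in>UNIV. lower g A x $ m * X $ m) = (\<Sum>m\<in>UNIV. \<Sum>j\<in>UNIV. G $ m $ j * A x $ j * X $ m)"
    unfolding lower_def by (simp add: sum_distrib_right)
  also have "\<dots> = quad G X (A x)"
    unfolding quad_def by (intro sum.cong refl) (simp add: mult_ac)
  finally show ?thesis using quad_G_sym by simp
qed

lemma Bred_orthogonal:
  assumes dA: "\<forall>k. (\<lambda>y. A y $ k) differentiable (at x)" and orth: "quad G (A x) X = 0"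
  shows "(\<Sum>m\<in>UNIV. \<Sum>v\<in>UNIV. Bred g A m v x * X $ m * X $ v) = quad G (cov_deriv g A X x) X"
proof -
  have "(\<Sum>m\<in>UNIV. \<Sum>v\<in>UNIV. Bred g A m v x * X $ m * X $ v)
      = (\<Sum>m\<in>UNIV. \<Sum>v\<in>UNIV. X $ m * X $ v * cov_covec g (lower g A) m v x)
        - (\<Sum>m\<in>UNIV. lower g A x $ m * X $ m) * (\<Sum>v\<in>UNIV. lower g (accel g A) x $ v * X $ v)"
    unfolding Bred_def sum_product by (simp add: sum_subtractf algebra_simps)
  then show ?thesis unfolding lower_inner orth quad_cov_deriv[OF dA] by simp
qed

lemma gperp_orthogonal:
  assumes "quad G (A x) X = 0"
  shows "(\<Sum>m\<in>UNIV. \<Sum>v\<in>UNIV. gperp g A m v x * X $ m * X $ v) = quad G X X"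
proof -
  have "(\<Sum>m\<in>UNIV. \<Sum>v\<in>UNIV. gperp g A m v x * X $ m * X $ v)
      = quad G X X - (\<Sum>m\<in>UNIV. lower g A x $ m * X $ m) * (\<Sum>v\<in>UNIV. lower g A x $ v * X $ v)"
    unfolding gperp_def quad_def
    by (simp add: sum_distrib_left sum_distrib_right sum_subtractf algebra_simps)
  then show ?thesis unfolding lower_inner assms by simp
qed

lemma shear_unit_orthogonal:
  assumes dA: "\<forall>k. (\<lambda>y. A y $ k) differentiable (at x)"
    and orth: "quad G (A x) X = 0" and unit: "quad G X X = -1"
  shows "tensor_eval (\<lambda>m v. shear g A m v x) X X
      = quad G (cov_deriv g A X x) X + expansion g A x / (real CARD('n) - 1)"
proof -
  define c where "c = expansion g A x / (real CARD('n) - 1)"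
  have "(\<Sum>m\<in>UNIV. \<Sum>v\<in>UNIV. Bred g A v m x * X $ m * X $ v)
      = (\<Sum>m\<in>UNIV. \<Sum>v\<in>UNIV. Bred g A m v x * X $ m * X $ v)"
    by (subst sum.swap) (simp add: mult_ac)
  moreover have "shear g A m v x * X $ m * X $ v = Bred g A m v x * X $ m * X $ v / 2
      + Bred g A v m x * X $ m * X $ v / 2 - c * (gperp g A m v x * X $ m * X $ v)" for m v
    unfolding shear_def c_def[symmetric] by (simp add: field_simps)
  then have "tensor_eval (\<lambda>m v. shear g A m v x) X X
      = (\<Sum>m\<in>UNIV. \<Sum>v\<in>UNIV. Bred g A m v x * X $ m * X $ v) / 2
        + (\<Sum>m\<in>UNIV. \<Sum>v\<in>UNIV. Bred g A v m x * X $ m * X $ v) / 2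
        - c * (\<Sum>m\<in>UNIV. \<Sum>v\<in>UNIV. gperp g A m v x * X $ m * X $ v)"
    unfolding tensor_eval_def by (simp only: sum.distrib sum_subtractf sum_divide_distrib sum_distrib_left)
  ultimately show ?thesis
    unfolding Bred_orthogonal[OF dA orth] gperp_orthogonal[of A X, OF orth] unit c_def by simp
qed
end

section \<open>Kinematics and thermodynamics\<close>

lemma boosted_velocity_split:
  fixes G :: "real^'n^'n" and xi eta uu :: "real^'n" and vv :: real
  defines "\<alpha> \<equiv> quad G uu xi / quad G xi xi" and "\<beta> \<equiv> quad G uu eta"
  assumes sym: "\<forall>i j. G $ i $ j = G $ j $ i" and timelike: "quad G xi xi < 0"
    and unit: "quad G eta eta = 1" and orth: "quad G eta ((1 / sqrt \<bar>quad G xi xi\<bar>) *\<^sub>R xi) = 0"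
    and v: "0 \<le> vv" "vv < 1"
    and uu: "uu = (1 / sqrt (1 - vv\<^sup>2)) *\<^sub>R ((1 / sqrt \<bar>quad G xi xi\<bar>) *\<^sub>R xi + vv *\<^sub>R eta)"
  shows "uu = \<alpha> *\<^sub>R xi + \<beta> *\<^sub>R eta" and "\<beta>\<^sup>2 + \<alpha>\<^sup>2 * quad G xi xi = -1"
    and "\<beta>\<^sup>2 = - vv\<^sup>2 * \<alpha>\<^sup>2 * quad G xi xi" and "\<alpha> > 0"
proof -
  define W where "W = quad G xi xi"
  define N0 where "N0 = sqrt \<bar>W\<bar>"
  define \<gamma> where "\<gamma> = 1 / sqrt (1 - vv\<^sup>2)"
  have W: "W < 0" using timelike W_def by simp
  have N0: "N0 > 0" "N0\<^sup>2 = - W" unfolding N0_def using W by auto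
  have "vv * vv \<le> vv" using v mult_left_le[of vv vv] by simp
  then have "1 - vv\<^sup>2 > 0" using v by (simp add: power2_eq_square)
  then have \<gamma>: "\<gamma> > 0" "\<gamma>\<^sup>2 * (1 - vv\<^sup>2) = 1" unfolding \<gamma>_def by (auto simp: power_divide)
  have "quad G eta xi = 0" using orth N0(1) unfolding quad_scaleR_right W_def[symmetric] N0_def[symmetric] by simp
  then have orth': "quad G eta xi = 0" "quad G xi eta = 0" using quad_sym[OF sym] by auto
  have uu': "uu = \<gamma> *\<^sub>R ((1 / N0) *\<^sub>R xi + vv *\<^sub>R eta)" using uu unfolding \<gamma>_def N0_def W_def by simp
  have \<alpha>: "\<alpha> = \<gamma> / N0"
    unfolding \<alpha>_def uu' quad_scaleR_left quad_add_left orth' W_def[symmetric] using W by simp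
  have \<beta>: "\<beta> = \<gamma> * vv"
    unfolding \<beta>_def uu' quad_scaleR_left quad_add_left orth' unit by simp
  have \<alpha>_sq: "\<alpha>\<^sup>2 * W = - \<gamma>\<^sup>2"
    unfolding \<alpha> using N0 W by (simp add: power_divide field_simps)
  show "uu = \<alpha> *\<^sub>R xi + \<beta> *\<^sub>R eta" unfolding \<alpha> \<beta> uu' by (simp add: scaleR_add_right)
  show "\<beta>\<^sup>2 + \<alpha>\<^sup>2 * quad G xi xi = -1"
    using \<alpha>_sq \<gamma>(2) unfolding \<beta> W_def by (simp add: power_mult_distrib algebra_simps)
  have "- vv\<^sup>2 * \<alpha>\<^sup>2 * W = - vv\<^sup>2 * (\<alpha>\<^sup>2 * W)" by (simp only: mult.assoc)
  also have "\<dots> = \<beta>\<^sup>2" unfolding \<alpha>_sq \<beta> by (simp add: power_mult_distrib)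
  finally show "\<beta>\<^sup>2 = - vv\<^sup>2 * \<alpha>\<^sup>2 * quad G xi xi" unfolding W_def ..
  show "\<alpha> > 0" unfolding \<alpha> using \<gamma>(1) N0(1) by simp
qed

lemma linear_pair:
  fixes L :: "real \<times> real \<Rightarrow> real"
  assumes "linear L"
  shows "L (a, b) = a * L (1, 0) + b * L (0, 1)"
proof -
  have "L (a, b) = L (a *\<^sub>R (1, 0) + b *\<^sub>R (0, 1))" by simp
  also have "\<dots> = a * L (1, 0) + b * L (0, 1)"
    by (simp only: linear_add[OF assms] linear_scale[OF assms] real_scaleR_def)
  finally show ?thesis .
qed

lemma dir_deriv_state_function:
  fixes F :: "real \<Rightarrow> real \<Rightarrow> real" and P s n :: "real^'n \<Rightarrow> real"
  assumes chart: "open U" "x \<in> U"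
    and F: "(\<lambda>z. F (fst z) (snd z)) differentiable (at (P x, s x))"
    and P: "P differentiable (at x)" and s: "s differentiable (at x)"
    and n: "\<forall>y\<in>U. n y = F (P y) (s y)"
  obtains c where "\<And>V. dir_deriv n V x = deriv (\<lambda>q. F q (s x)) (P x) * dir_deriv P V x + c * dir_deriv s V x"
proof -
  let ?F = "\<lambda>z. F (fst z) (snd z)"
  let ?L = "frechet_derivative ?F (at (P x, s x))"
  have L: "(?F has_derivative ?L) (at (P x, s x))" using F frechet_derivative_works by blast
  have L_pair: "?L (a, b) = a * ?L (1, 0) + b * ?L (0, 1)" for a b
    by (rule linear_pair[OF has_derivative_linear[OF L]])
  have "((\<lambda>y. (P y, s y)) has_derivative
      (\<lambda>h. (frechet_derivative P (at x) h, frechet_derivative s (at x) h))) (at x)"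
    using P s by (intro has_derivative_Pair) (simp_all add: frechet_derivative_works[symmetric])
  from diff_chain_at[OF this L]
  have "((\<lambda>y. F (P y) (s y)) has_derivative
      (\<lambda>h. ?L (frechet_derivative P (at x) h, frechet_derivative s (at x) h))) (at x)"
    by (simp add: o_def)
  from has_derivative_transform_within_open[OF this chart]
  have n_deriv: "(n has_derivative (\<lambda>h. ?L (frechet_derivative P (at x) h, frechet_derivative s (at x) h))) (at x)"
    using n by simp
  have pd_n: "pd n i x = ?L (1, 0) * pd P i x + ?L (0, 1) * pd s i x" for i
  proof -
    have "pd n i x = ?L (pd P i x, pd s i x)"
      using pd_eq_of_has_derivative[OF n_deriv] unfolding pd_def by simp
    then show ?thesis using L_pair[of "pd P i x" "pd s i x"] by (simp add: mult.commute)
  qed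
  have "((\<lambda>q. (q, s x)) has_derivative (\<lambda>t. (t, 0))) (at (P x))"
    by (intro has_derivative_Pair has_derivative_ident has_derivative_const)
  from diff_chain_at[OF this L]
  have "((\<lambda>q. F q (s x)) has_derivative (\<lambda>t. ?L (t, 0))) (at (P x))" by (simp add: o_def)
  moreover have "(\<lambda>t. ?L (t, 0)) = (*) (?L (1, 0))"
  proof
    show "?L (t, 0) = ?L (1, 0) * t" for t using L_pair[of t 0] by simp
  qed
  ultimately have "((\<lambda>q. F q (s x)) has_real_derivative ?L (1, 0)) (at (P x))"
    unfolding has_field_derivative_def by simp
  then have deriv_F: "deriv (\<lambda>q. F q (s x)) (P x) = ?L (1, 0)" by (rule DERIV_imp_deriv)
  show ?thesis
    by (rule that[of "?L (0, 1)"], unfold dir_deriv_def pd_n deriv_F)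
      (simp add: sum.distrib sum_distrib_left sum_distrib_right algebra_simps)
qed

text \<open>Since \<open>\<partial>h/\<partial>P = 1/n\<close> at fixed entropy, the definition of \<open>sound_speed_sq\<close> reads
  \<open>v\<^sub>s\<^sup>2 = 1 / (h \<partial>n/\<partial>P)\<close>, i.e. \<open>dP = v\<^sub>s\<^sup>2 h dn\<close> along isentropic directions.\<close>

lemma eos_isentropic_pressure:
  assumes eos: "eos D H N Tm" and state: "(P x, s x) \<in> D"
    and chart: "open U" "x \<in> U"
    and n: "\<forall>y\<in>U. n y = N (P y) (s y)" and h: "h x = H (P x) (s x)"
    and P: "P differentiable (at x)" and s: "s differentiable (at x)"
    and isentropic: "dir_deriv s V x = 0"
  shows "dir_deriv P V x = sound_speed_sq H N (P x) (s x) * h x * dir_deriv n V x"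
proof -
  let ?c = "deriv (\<lambda>q. N q (s x)) (P x)" and ?S = "sound_speed_sq H N (P x) (s x)"
  have "Ck 2 D (\<lambda>z. N (fst z) (snd z))" using eos unfolding eos_def by blast
  then have "(\<lambda>z. N (fst z) (snd z)) differentiable (at (P x, s x))"
    using state by (rule Ck2_differentiable)
  then obtain c' where chain: "\<And>V. dir_deriv n V x = ?c * dir_deriv P V x + c' * dir_deriv s V x"
    using dir_deriv_state_function[OF chart _ P s n] by blast
  have "H (P x) (s x) > 0" "N (P x) (s x) > 0" "?c \<noteq> 0"
    and "((\<lambda>q. H q (s x)) has_real_derivative (1 / N (P x) (s x))) (at (P x))"
    using eos state unfolding eos_def by blast+
  then have S: "?S * h x * ?c = 1"
    unfolding sound_speed_sq_def h by (simp add: DERIV_imp_deriv field_simps)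
  have "dir_deriv P V x = (?S * h x * ?c) * dir_deriv P V x" unfolding S by simp
  also have "\<dots> = ?S * h x * dir_deriv n V x" using chain[of V] isentropic by simp
  finally show ?thesis .
qed

text \<open>Here \<open>u = a \<xi> + b \<eta>\<close>, \<open>w = \<xi>\<cdot>\<xi>\<close>, \<open>Q = u\<cdot>\<xi>\<close>; \<open>dh\<close> is the derivative of \<open>h\<close> along \<open>u\<close>,
  and \<open>dQ\<close>, \<open>da\<close>, \<open>db\<close>, \<open>dW\<close> are the derivatives of \<open>Q\<close>, \<open>a\<close>, \<open>b\<close>, \<open>w\<close> along \<open>\<eta>\<close>.\<close>

lemma sonic_point_relation:
  fixes a b w S h \<Theta> dh dQ da db dW :: real
  assumes nonzero: "a \<noteq> 0" "w \<noteq> 0" "h \<noteq> 0" "S \<noteq> 0"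
    and continuity: "dh = - S * h * (db + b * \<Theta>)"
    and bernoulli: "a * w * dh + h * b * dQ = 0"
    and normalization: "2 * b * db + 2 * a * w * da + a\<^sup>2 * dW = 0"
    and quotient: "da * w\<^sup>2 = dQ * w - a * w * dW"
    and sonic: "b\<^sup>2 = - S * a\<^sup>2 * w"
  shows "dW = 2 * S * w * \<Theta>"
proof -
  have "h * (b * dQ - a * w * S * (db + b * \<Theta>)) = 0" using bernoulli continuity by algebra
  then have "b * dQ = a * w * S * (db + b * \<Theta>)" using nonzero by simp
  then have "S * a * w * (a * dQ + b * (db + b * \<Theta>)) = 0" using sonic by algebra
  then have flow: "a * dQ + b * (db + b * \<Theta>) = 0" using nonzero by simp
  have "w * (da * w + a * dW - dQ) = 0" using quotient by algebra
  then have "dQ = da * w + a * dW" using nonzero by simp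
  then have "a\<^sup>2 * (2 * S * w * \<Theta> - dW) = 0" using flow normalization sonic by algebra
  then show ?thesis using nonzero by simp
qed

section \<open>Steady perfect fluid near a sonic point\<close>

locale steady_fluid_at = metric_chart_at g U p
  for g :: "real^'n \<Rightarrow> real^'n^'n" and U :: "(real^'n) set" and p :: "real^'n" +
  fixes \<xi> u \<eta> :: "real^'n \<Rightarrow> real^'n" and n h P s T v :: "real^'n \<Rightarrow> real" and vs2 :: real
  assumes \<xi>_differentiable: "\<forall>k. (\<lambda>y. \<xi> y $ k) differentiable (at p)"
    and u_differentiable: "\<forall>k. (\<lambda>y. u y $ k) differentiable (at p)"
    and \<eta>_differentiable: "\<forall>k. (\<lambda>y. \<eta> y $ k) differentiable (at p)"
    and state_differentiable: "n differentiable (at p)" "h differentiable (at p)"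
      "P differentiable (at p)" "s differentiable (at p)"
    and timelike: "\<forall>y\<in>U. quad (g y) (\<xi> y) (\<xi> y) < 0"
    and killing: "\<forall>i j. cov_covec g (lower g \<xi>) i j p + cov_covec g (lower g \<xi>) j i p = 0"
    and positive: "n p > 0" "h p > 0" "T p > 0"
    and unit_velocity: "\<forall>y\<in>U. quad (g y) (u y) (u y) = -1"
    and gibbs: "\<forall>i. pd h i p = T p * pd s i p + pd P i p / n p"
    and continuity: "divergence g (\<lambda>y. n y *\<^sub>R u y) p = 0"
    and euler: "\<forall>\<nu>. div_tensor g
      (\<lambda>y. \<chi> \<alpha> \<beta>. n y * h y * u y $ \<alpha> * u y $ \<beta> + P y * matrix_inv (g y) $ \<alpha> $ \<beta>) \<nu> p = 0"
    and steady: "lie_scalar \<xi> P p = 0" "lie_scalar \<xi> s p = 0" "lie_vec \<xi> u p = 0" "lie_vec \<xi> \<eta> p = 0"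
    and velocity: "\<forall>y\<in>U. 0 \<le> v y \<and> v y < 1 \<and>
      u y = (1 / sqrt (1 - (v y)\<^sup>2)) *\<^sub>R (normalize_field g \<xi> y + v y *\<^sub>R \<eta> y)"
    and streamline: "\<forall>y\<in>U. quad (g y) (\<eta> y) (\<eta> y) = 1 \<and> quad (g y) (\<eta> y) (normalize_field g \<xi> y) = 0"
    and sound_speed: "vs2 > 0" "\<forall>V. dir_deriv s V p = 0 \<longrightarrow> dir_deriv P V p = vs2 * h p * dir_deriv n V p"
begin

definition xi_sq :: "real^'n \<Rightarrow> real" where
  "xi_sq y = quad (g y) (\<xi> y) (\<xi> y)"

definition u_xi :: "real^'n \<Rightarrow> real" where
  "u_xi y = quad (g y) (u y) (\<xi> y)"

definition alpha :: "real^'n \<Rightarrow> real" where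
  "alpha y = u_xi y / xi_sq y"

definition beta :: "real^'n \<Rightarrow> real" where
  "beta y = quad (g y) (u y) (\<eta> y)"

lemma xi_sq_neg: "xi_sq p < 0"
  using timelike chart unfolding xi_sq_def by blast

lemma velocity_split:
  assumes "y \<in> U"
  shows "u y = alpha y *\<^sub>R \<xi> y + beta y *\<^sub>R \<eta> y" and "(beta y)\<^sup>2 + (alpha y)\<^sup>2 * xi_sq y = -1"
    and "(beta y)\<^sup>2 = - (v y)\<^sup>2 * (alpha y)\<^sup>2 * xi_sq y" and "alpha y > 0"
  using boosted_velocity_split[of "g y" "\<xi> y" "\<eta> y" "v y" "u y"] assms symmetric timelike streamline velocity
  unfolding alpha_def u_xi_def xi_sq_def beta_def normalize_field_def by auto

lemma scalars_differentiable:
  "xi_sq differentiable (at p)" "u_xi differentiable (at p)"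
  "alpha differentiable (at p)" "beta differentiable (at p)"
proof -
  show xi_sq: "xi_sq differentiable (at p)" unfolding xi_sq_def
    by (rule quad_differentiable[OF metric_differentiable \<xi>_differentiable \<xi>_differentiable])
  show u_xi: "u_xi differentiable (at p)" unfolding u_xi_def
    by (rule quad_differentiable[OF metric_differentiable u_differentiable \<xi>_differentiable])
  show "alpha differentiable (at p)"
    using xi_sq u_xi xi_sq_neg unfolding alpha_def[abs_def] by (intro differentiable_divide) auto
  show "beta differentiable (at p)" unfolding beta_def
    by (rule quad_differentiable[OF metric_differentiable u_differentiable \<eta>_differentiable])
qed

lemma killing_antisym: "quad G (cov_deriv g \<xi> Y p) Z + quad G (cov_deriv g \<xi> Z p) Y = 0"
  by (rule killing_cov_deriv_antisym[OF \<xi>_differentiable killing])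

lemma dir_deriv_xi_sq: "dir_deriv xi_sq V p = 2 * quad G (cov_deriv g \<xi> V p) (\<xi> p)"
  unfolding xi_sq_def[abs_def] dir_deriv_quad[OF \<xi>_differentiable \<xi>_differentiable]
  using quad_G_sym by simp

lemma dir_deriv_u_xi: "dir_deriv u_xi V p = quad G (cov_deriv g u V p) (\<xi> p) + quad G (u p) (cov_deriv g \<xi> V p)"
  unfolding u_xi_def[abs_def] by (rule dir_deriv_quad[OF u_differentiable \<xi>_differentiable])

text \<open>Stationarity: \<open>\<xi>\<cdot>\<xi>\<close> and \<open>u\<cdot>\<xi>\<close> are constant along \<open>\<xi>\<close>, by the Killing equation and \<open>[\<xi>, u] = 0\<close>.\<close>

lemma dir_deriv_along_xi: "dir_deriv xi_sq (\<xi> p) p = 0" "dir_deriv u_xi (\<xi> p) p = 0"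
    "dir_deriv alpha (\<xi> p) p = 0"
proof -
  show xi_sq: "dir_deriv xi_sq (\<xi> p) p = 0"
    using dir_deriv_xi_sq killing_antisym[of "\<xi> p" "\<xi> p"] by simp
  have "cov_deriv g u (\<xi> p) p = cov_deriv g \<xi> (u p) p"
    using steady(3) unfolding lie_vec_eq_cov_deriv by simp
  then show u_xi: "dir_deriv u_xi (\<xi> p) p = 0"
    unfolding dir_deriv_u_xi using killing_antisym[of "u p" "\<xi> p"] quad_G_sym[of "u p"] by simp
  show "dir_deriv alpha (\<xi> p) p = 0"
    using dir_deriv_divide[OF scalars_differentiable(2,1)] xi_sq u_xi xi_sq_neg
    unfolding alpha_def[abs_def] by simp
qed

lemma dir_deriv_along_u: "dir_deriv f (u p) p = alpha p * dir_deriv f (\<xi> p) p + beta p * dir_deriv f (\<eta> p) p"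
  using velocity_split(1)[OF chart(2)] dir_deriv_linear by metis

lemma divergence_velocity: "divergence g u p = dir_deriv beta (\<eta> p) p + beta p * expansion g \<eta> p"
proof -
  have "divergence g u p = divergence g (\<lambda>y. alpha y *\<^sub>R \<xi> y + beta y *\<^sub>R \<eta> y) p"
    using velocity_split(1) by (intro divergence_cong_open) blast
  also have "\<dots> = divergence g (\<lambda>y. alpha y *\<^sub>R \<xi> y) p + divergence g (\<lambda>y. beta y *\<^sub>R \<eta> y) p"
    using scalars_differentiable \<xi>_differentiable \<eta>_differentiable by (intro divergence_add) auto
  also have "\<dots> = dir_deriv beta (\<eta> p) p + beta p * expansion g \<eta> p"
    using divergence_scaleR[OF scalars_differentiable(3) \<xi>_differentiable]
      divergence_scaleR[OF scalars_differentiable(4) \<eta>_differentiable]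
      divergence_killing[OF \<xi>_differentiable killing] dir_deriv_along_xi(3)
    unfolding expansion_def by simp
  finally show ?thesis .
qed

lemma acceleration_orthogonal: "quad G (cov_deriv g u (u p) p) (u p) = 0"
proof -
  have "dir_deriv (\<lambda>y. quad (g y) (u y) (u y)) (u p) p = 0"
    using unit_velocity by (intro dir_deriv_const_on_open[OF chart]) blast
  then show ?thesis
    unfolding dir_deriv_quad[OF u_differentiable u_differentiable] using quad_G_sym by simp
qed

lemma divergence_enthalpy_current:
  "divergence g (\<lambda>y. (n y * h y) *\<^sub>R u y) p = n p * dir_deriv h (u p) p"
proof -
  have "\<forall>k. (\<lambda>y. (n y *\<^sub>R u y) $ k) differentiable (at p)"
    using state_differentiable u_differentiable by simp
  then have "divergence g (\<lambda>y. h y *\<^sub>R (n y *\<^sub>R u y)) p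
      = dir_deriv h (n p *\<^sub>R u p) p + h p * divergence g (\<lambda>y. n y *\<^sub>R u y) p"
    by (rule divergence_scaleR[OF state_differentiable(2)])
  then show ?thesis using continuity by (simp add: dir_deriv_scaleR mult.commute)
qed

lemma momentum_equation:
  "quad G (u p) Y * n p * dir_deriv h (u p) p + n p * h p * quad G (cov_deriv g u (u p) p) Y
     + dir_deriv P Y p = 0"
  using euler_contracted[OF differentiable_mult[OF state_differentiable(1,2)] state_differentiable(3)
      u_differentiable euler, of Y]
  unfolding divergence_enthalpy_current by (simp add: mult.assoc)

lemma enthalpy_pressure_along_flow: "n p * dir_deriv h (u p) p = dir_deriv P (u p) p"
  using momentum_equation[of "u p"] unit_velocity chart acceleration_orthogonal by simp

lemma entropy_along_flow: "dir_deriv s (u p) p = 0"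
proof -
  have "dir_deriv h (u p) p = T p * dir_deriv s (u p) p + dir_deriv P (u p) p / n p"
    unfolding dir_deriv_def using gibbs
    by (simp add: sum.distrib sum_distrib_left sum_divide_distrib algebra_simps)
  then have "n p * T p * dir_deriv s (u p) p = 0"
    using enthalpy_pressure_along_flow positive by (simp add: field_simps)
  then show ?thesis using positive by simp
qed

lemma enthalpy_along_flow: "dir_deriv h (u p) p = - vs2 * h p * divergence g u p"
proof -
  have "dir_deriv n (u p) p = - n p * divergence g u p"
    using divergence_scaleR[OF state_differentiable(1) u_differentiable] continuity by simp
  then have "n p * dir_deriv h (u p) p = n p * (- vs2 * h p * divergence g u p)"
    using enthalpy_pressure_along_flow entropy_along_flow sound_speed(2) by simp
  then show ?thesis using positive(1) mult_left_cancel[of "n p"] by (metis less_irrefl)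
qed

lemma bernoulli: "u_xi p * dir_deriv h (u p) p + h p * dir_deriv u_xi (u p) p = 0"
proof -
  have "quad G (u p) (cov_deriv g \<xi> (u p) p) = 0"
    using killing_antisym[of "u p" "u p"] quad_G_sym[of "u p"] by simp
  then have "quad G (cov_deriv g u (u p) p) (\<xi> p) = dir_deriv u_xi (u p) p"
    unfolding dir_deriv_u_xi by simp
  moreover have "dir_deriv P (\<xi> p) p = 0"
    using steady(1) unfolding lie_scalar_def dir_deriv_def .
  ultimately have "n p * (u_xi p * dir_deriv h (u p) p + h p * dir_deriv u_xi (u p) p) = 0"
    using momentum_equation[of "\<xi> p"] unfolding u_xi_def by (simp add: algebra_simps)
  then show ?thesis using positive by simp
qed

lemma normalization_derivative:
  "2 * beta p * dir_deriv beta V p + 2 * alpha p * xi_sq p * dir_deriv alpha V p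
     + (alpha p)\<^sup>2 * dir_deriv xi_sq V p = 0"
proof -
  have "dir_deriv (\<lambda>y. beta y * beta y + alpha y * alpha y * xi_sq y) V p = 0"
    using velocity_split(2)
    by (intro dir_deriv_const_on_open[OF chart, where c="-1"]) (simp add: power2_eq_square)
  moreover have "(\<lambda>y. beta y * beta y) differentiable (at p)"
    "(\<lambda>y. alpha y * alpha y) differentiable (at p)"
    "(\<lambda>y. alpha y * alpha y * xi_sq y) differentiable (at p)"
    using scalars_differentiable by simp_all
  ultimately show ?thesis
    using scalars_differentiable
    by (simp add: dir_deriv_add dir_deriv_mult power2_eq_square algebra_simps)
qed

lemma dir_deriv_alpha:
  "dir_deriv alpha V p * (xi_sq p)\<^sup>2 = dir_deriv u_xi V p * xi_sq p - alpha p * xi_sq p * dir_deriv xi_sq V p"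
  using dir_deriv_divide[OF scalars_differentiable(2,1), of V] xi_sq_neg
  unfolding alpha_def[abs_def] by (simp add: power2_eq_square field_simps)

lemma shear_xi_xi:
  "tensor_eval (\<lambda>\<mu> \<nu>. shear g \<eta> \<mu> \<nu> p) (normalize_field g \<xi> p) (normalize_field g \<xi> p)
     = - dir_deriv xi_sq (\<eta> p) p / (2 * xi_sq p) + expansion g \<eta> p / (real CARD('n) - 1)"
proof -
  define X where "X = normalize_field g \<xi> p"
  have X: "X = (1 / sqrt (- xi_sq p)) *\<^sub>R \<xi> p"
    unfolding X_def normalize_field_def xi_sq_def using xi_sq_neg[unfolded xi_sq_def] by simp
  have root: "sqrt (- xi_sq p) * sqrt (- xi_sq p) = - xi_sq p" using xi_sq_neg by simp
  have "quad G X X = -1"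
    unfolding X quad_scaleR_left quad_scaleR_right xi_sq_def[symmetric]
    using root xi_sq_neg by (simp add: field_simps)
  moreover have "quad G (\<eta> p) X = 0" using streamline chart unfolding X_def by blast
  moreover have "cov_deriv g \<eta> (\<xi> p) p = cov_deriv g \<xi> (\<eta> p) p"
    using steady(4) unfolding lie_vec_eq_cov_deriv by simp
  then have "quad G (cov_deriv g \<eta> X p) X = - dir_deriv xi_sq (\<eta> p) p / (2 * xi_sq p)"
    unfolding X cov_deriv_scaleR quad_scaleR_left quad_scaleR_right dir_deriv_xi_sq
    using root xi_sq_neg by (simp add: field_simps)
  ultimately show ?thesis
    unfolding X_def[symmetric] using shear_unit_orthogonal[OF \<eta>_differentiable] by simp
qed

theorem shear_at_sonic_point:
  assumes sonic: "(v p)\<^sup>2 = vs2"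
  shows "tensor_eval (\<lambda>\<mu> \<nu>. shear g \<eta> \<mu> \<nu> p) (normalize_field g \<xi> p) (normalize_field g \<xi> p)
     = expansion g \<eta> p * (1 / (real CARD('n) - 1) - vs2)"
proof -
  have nonzero: "alpha p \<noteq> 0" "xi_sq p \<noteq> 0" "h p \<noteq> 0" "vs2 \<noteq> 0"
    using velocity_split(4)[OF chart(2)] xi_sq_neg positive sound_speed(1) by auto
  have continuity: "dir_deriv h (u p) p
      = - vs2 * h p * (dir_deriv beta (\<eta> p) p + beta p * expansion g \<eta> p)"
    using enthalpy_along_flow divergence_velocity by simp
  have "u_xi p = alpha p * xi_sq p" unfolding alpha_def using xi_sq_neg by simp
  then have bernoulli: "alpha p * xi_sq p * dir_deriv h (u p) p + h p * beta p * dir_deriv u_xi (\<eta> p) p = 0"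
    using bernoulli dir_deriv_along_u[of u_xi] dir_deriv_along_xi(2) by (simp add: algebra_simps)
  have "(beta p)\<^sup>2 = - vs2 * (alpha p)\<^sup>2 * xi_sq p"
    using velocity_split(3)[OF chart(2)] sonic by simp
  from sonic_point_relation[OF nonzero continuity bernoulli normalization_derivative dir_deriv_alpha this]
  have "dir_deriv xi_sq (\<eta> p) p = 2 * vs2 * xi_sq p * expansion g \<eta> p" .
  then show ?thesis unfolding shear_xi_xi using xi_sq_neg by (simp add: field_simps)
qed

end

lemma lorentzian_metric_chart_at:
  assumes "open U" "p \<in> U" "smooth_metric U g" "\<forall>x\<in>U. lorentzian (g x)"
  shows "metric_chart_at g U p"
proof
  show "\<forall>y\<in>U. invertible (g y)" using assms(4) lorentzian_invertible by blast
  show "\<forall>y\<in>U. \<forall>i j. g y $ i $ j = g y $ j $ i" using assms(4) unfolding lorentzian_def by blast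
  show "\<forall>i j. (\<lambda>y. g y $ i $ j) differentiable (at p)"
    using assms(2,3) smooth_fn_differentiable unfolding smooth_metric_def by blast
qed (use assms in auto)

theorem proposition1:
  fixes g :: "real^'n \<Rightarrow> real^'n^'n"
    and U :: "(real^'n) set" and p :: "real^'n"
    and \<xi> u \<eta> :: "real^'n \<Rightarrow> real^'n"
    and n h P s T v :: "real^'n \<Rightarrow> real"
    and H N Tm :: "real \<Rightarrow> real \<Rightarrow> real" and D :: "(real \<times> real) set"
  defines "d \<equiv> real CARD('n) - 1"
  defines "\<xi>b \<equiv> normalize_field g \<xi>"
  defines "vs \<equiv> (\<lambda>x. sqrt (sound_speed_sq H N (P x) (s x)))"
  assumes dim: "CARD('n) \<ge> 2"
    \<comment> \<open>spacetime (chart on a neighbourhood U of p)\<close>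
    and U: "open U" "p \<in> U"
    and metric: "smooth_metric U g" "\<forall>x\<in>U. lorentzian (g x)"
    \<comment> \<open>timelike Killing field\<close>
    and killing: "smooth_vec U \<xi>" "killing_on g U \<xi>" "\<forall>x\<in>U. quad (g x) (\<xi> x) (\<xi> x) < 0"
    \<comment> \<open>equation of state\<close>
    and eos: "eos D H N Tm" "\<forall>x\<in>U. (P x, s x) \<in> D"
    and state: "\<forall>x\<in>U. h x = H (P x) (s x) \<and> n x = N (P x) (s x) \<and> T x = Tm (P x) (s x)"
    \<comment> \<open>regularity C^2\<close>
    and reg: "Ck 2 U n" "Ck 2 U h" "Ck 2 U P" "Ck 2 U s" "Ck 2 U T" "Ck_vec 2 U u"
             "Ck 2 U v" "Ck_vec 2 U \<eta>"
    \<comment> \<open>perfect fluid\<close>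
    and pos: "\<forall>x\<in>U. n x > 0 \<and> h x > 0 \<and> P x > 0 \<and> s x > 0 \<and> T x > 0"
    and unit_u: "\<forall>x\<in>U. quad (g x) (u x) (u x) = -1"
    and gibbs: "\<forall>x\<in>U. \<forall>i. pd h i x = T x * pd s i x + pd P i x / n x"
    and continuity: "\<forall>x\<in>U. divergence g (\<lambda>y. n y *\<^sub>R u y) x = 0"
    and euler: "\<forall>x\<in>U. \<forall>\<nu>. div_tensor g
        (\<lambda>y. \<chi> \<alpha> \<beta>. n y * h y * u y $ \<alpha> * u y $ \<beta> + P y * matrix_inv (g y) $ \<alpha> $ \<beta>) \<nu> x = 0"
    \<comment> \<open>steady flow\<close>
    and steady: "\<forall>x\<in>U. lie_scalar \<xi> P x = 0 \<and> lie_scalar \<xi> s x = 0 \<and> lie_vec \<xi> u x = 0"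
    \<comment> \<open>decomposition u = (1-v^2)^{-1/2} (\<xi>b + v \<eta>)\<close>
    and decomp: "\<forall>x\<in>U. 0 \<le> v x \<and> v x < 1 \<and>
        u x = (1 / sqrt (1 - (v x)\<^sup>2)) *\<^sub>R (\<xi>b x + v x *\<^sub>R \<eta> x)"
    and eta: "\<forall>x\<in>U. quad (g x) (\<eta> x) (\<eta> x) = 1 \<and> quad (g x) (\<eta> x) (\<xi>b x) = 0 \<and> lie_vec \<xi> \<eta> x = 0"
    \<comment> \<open>sonic point with nonvanishing expansion\<close>
    and sonic: "v p = vs p"
    and expand: "expansion g \<eta> p \<noteq> 0"
  shows "vs p = 1 / sqrt d \<longleftrightarrow> tensor_eval (\<lambda>\<mu> \<nu>. shear g \<eta> \<mu> \<nu> p) (\<xi>b p) (\<xi>b p) = 0"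
proof -
  let ?S = "sound_speed_sq H N (P p) (s p)"
  have S_pos: "?S > 0" using eos U(2) unfolding eos_def by blast
  have isentropic: "\<forall>V. dir_deriv s V p = 0 \<longrightarrow> dir_deriv P V p = ?S * h p * dir_deriv n V p"
    using eos_isentropic_pressure[OF eos(1) _ U] eos(2) state Ck2_differentiable[OF reg(3) U(2)]
      Ck2_differentiable[OF reg(4) U(2)] U(2) by blast
  have chart: "metric_chart_at g U p" by (rule lorentzian_metric_chart_at[OF U metric])
  interpret fluid: steady_fluid_at g U p \<xi> u \<eta> n h P s T v ?S
  proof (intro steady_fluid_at.intro[OF chart] steady_fluid_at_axioms.intro)
    show "\<forall>k. (\<lambda>y. \<xi> y $ k) differentiable (at p)"
      using killing(1) U(2) smooth_fn_differentiable unfolding smooth_vec_def by blast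
    show "\<forall>k. (\<lambda>y. u y $ k) differentiable (at p)" "\<forall>k. (\<lambda>y. \<eta> y $ k) differentiable (at p)"
      using reg(6,8) U(2) Ck2_differentiable unfolding Ck_vec_def by blast+
    show "n differentiable (at p)" "h differentiable (at p)" "P differentiable (at p)" "s differentiable (at p)"
      using reg(1-4) U(2) Ck2_differentiable by blast+
  qed (use U(2) killing(2,3) pos unit_u gibbs continuity euler steady decomp eta S_pos isentropic
      in \<open>simp_all add: killing_on_def \<xi>b_def\<close>)
  have "(v p)\<^sup>2 = ?S" using sonic S_pos unfolding vs_def by simp
  then have shear: "tensor_eval (\<lambda>\<mu> \<nu>. shear g \<eta> \<mu> \<nu> p) (\<xi>b p) (\<xi>b p) = expansion g \<eta> p * (1 / d - ?S)"
    unfolding \<xi>b_def d_def by (rule fluid.shear_at_sonic_point)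
  have "1 / sqrt d = sqrt (1 / d)" by (simp add: real_sqrt_divide)
  then have "vs p = 1 / sqrt d \<longleftrightarrow> ?S = 1 / d" unfolding vs_def by simp
  then show ?thesis using shear expand by auto
qed
end
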